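(* Let $\mathcal{F}=\{(X,\rho_1);f_1,\dots,f_N\}$ and $\mathcal{G}=\{(Y,\rho_2);g_1,\dots,g_N\}$ be IFSs on complete metric spaces with $\rho_1(f_i(x),f_i(x'))=c_i\rho_1(x,x')$ and $\rho_2(g_i(y),g_i(y'))\le r_i\rho_2(y,y')$ for all $x,x'\in X$, $y,y'\in Y$, where $c_i,r_i\in(0,1)$. If $c_i\le r_i$ for all $i$ and $\mathcal{F}$ satisfies the strong open set condition, then $s_0\le\dim_H G(T_{\mathcal{FG}})\le t_0$, where $\sum_{i=1}^Nr_i^{t_0}=1$ and $\sum_{i=1}^Nc_i^{s_0}=1$.
   Context: $X\times Y$ carries the metric $\mathcal{D}((x,y),(x',y'))=\max\{\rho_1(x,x'),\rho_2(y,y')\}$. Attractor $A_\mathcal{F}$: unique nonempty compact $A$ with $A=\bigcup f_i(A)$. Code space $\Omega=\{1,\dots,N\}^{\mathbb{N}}$ ordered lexicographically; address map $\phi_\mathcal{F}(\sigma)=\lim_kf_{\sigma_1}\circ\cdots\circ f_{\sigma_k}(x)$; tops function $\tau_\mathcal{F}(x)=\max\{\sigma:\phi_\mathcal{F}(\sigma)=x\}$; fractal transformation $T_{\mathcal{FG}}=\phi_\mathcal{G}\circ\tau_\mathcal{F}:A_\mathcal{F}\to A_\mathcal{G}$; $G(T_{\mathcal{FG}})=\{(x,T_{\mathcal{FG}}(x)):x\in A_\mathcal{F}\}$. SOSC: a nonempty open $U$ with $f_i(U)\subset U$, $f_i(U)\cap f_j(U)=\emptyset$ for $i\ne j$, $U\cap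 A_\mathcal{F}\ne\emptyset$. *)

theory Defs
  imports "HOL-Analysis.Analysis"
begin

text \<open>An IFS is given by a number N and maps f i, i in {1..N}, on the
  ambient type (the whole metric space X).\<close>

definition attractor :: "nat \<Rightarrow> (nat \<Rightarrow> 'a::metric_space \<Rightarrow> 'a) \<Rightarrow> 'a set" where
  "attractor N f = (THE A. A \<noteq> {} \<and> compact A \<and> A = (\<Union>i\<in>{1..N}. f i ` A))"

text \<open>Code space: sequences sigma with sigma k in {1..N}; sigma 0 is sigma_1.\<close>
definition code_space :: "nat \<Rightarrow> (nat \<Rightarrow> nat) set" where
  "code_space N = {\<sigma>. \<forall>k. \<sigma> k \<in> {1..N}}"

definition lex_less :: "(nat \<Rightarrow> nat) \<Rightarrow> (nat \<Rightarrow> nat) \<Rightarrow> bool" where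
  "lex_less \<sigma> \<tau> = (\<exists>k. (\<forall>j<k. \<sigma> j = \<tau> j) \<and> \<sigma> k < \<tau> k)"

definition lex_le :: "(nat \<Rightarrow> nat) \<Rightarrow> (nat \<Rightarrow> nat) \<Rightarrow> bool" where
  "lex_le \<sigma> \<tau> = (\<sigma> = \<tau> \<or> lex_less \<sigma> \<tau>)"

primrec fcomp :: "(nat \<Rightarrow> 'a \<Rightarrow> 'a) \<Rightarrow> (nat \<Rightarrow> nat) \<Rightarrow> nat \<Rightarrow> 'a \<Rightarrow> 'a" where
  "fcomp f \<sigma> 0 = id"
| "fcomp f \<sigma> (Suc k) = fcomp f \<sigma> k \<circ> f (\<sigma> k)"

definition address :: "(nat \<Rightarrow> 'a::metric_space \<Rightarrow> 'a) \<Rightarrow> (nat \<Rightarrow> nat) \<Rightarrow> 'a" where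
  "address f \<sigma> = (THE y. \<forall>x. (\<lambda>k. fcomp f \<sigma> k x) \<longlonglongrightarrow> y)"

definition tops :: "nat \<Rightarrow> (nat \<Rightarrow> 'a::metric_space \<Rightarrow> 'a) \<Rightarrow> 'a \<Rightarrow> (nat \<Rightarrow> nat)" where
  "tops N f x = (THE \<sigma>. \<sigma> \<in> code_space N \<and> address f \<sigma> = x \<and>
      (\<forall>\<tau>\<in>code_space N. address f \<tau> = x \<longrightarrow> lex_le \<tau> \<sigma>))"

definition fractal_transformation ::
  "nat \<Rightarrow> (nat \<Rightarrow> 'a::metric_space \<Rightarrow> 'a) \<Rightarrow> (nat \<Rightarrow> 'b::metric_space \<Rightarrow> 'b) \<Rightarrow> 'a \<Rightarrow> 'b" where
  "fractal_transformation N f g x = address g (tops N f x)"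

definition fractal_graph ::
  "nat \<Rightarrow> (nat \<Rightarrow> 'a::metric_space \<Rightarrow> 'a) \<Rightarrow> (nat \<Rightarrow> 'b::metric_space \<Rightarrow> 'b) \<Rightarrow> ('a \<times> 'b) set" where
  "fractal_graph N f g = {(x, fractal_transformation N f g x) | x. x \<in> attractor N f}"

definition SOSC :: "nat \<Rightarrow> (nat \<Rightarrow> 'a::metric_space \<Rightarrow> 'a) \<Rightarrow> bool" where
  "SOSC N f = (\<exists>U. open U \<and> U \<noteq> {} \<and> (\<forall>i\<in>{1..N}. f i ` U \<subseteq> U) \<and>
     (\<forall>i\<in>{1..N}. \<forall>j\<in>{1..N}. i \<noteq> j \<longrightarrow> f i ` U \<inter> f j ` U = {}) \<and>
     U \<inter> attractor N f \<noteq> {})"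

definition max_dist :: "'a::metric_space \<times> 'b::metric_space \<Rightarrow> 'a \<times> 'b \<Rightarrow> real" where
  "max_dist p q = max (dist (fst p) (fst q)) (dist (snd p) (snd q))"

definition ddiam :: "('c \<Rightarrow> 'c \<Rightarrow> real) \<Rightarrow> 'c set \<Rightarrow> real" where
  "ddiam d U = (if U = {} then 0 else Sup {d x y | x y. x \<in> U \<and> y \<in> U})"

definition diam_pow :: "('c \<Rightarrow> 'c \<Rightarrow> real) \<Rightarrow> real \<Rightarrow> 'c set \<Rightarrow> ennreal" where
  "diam_pow d s U = (if U = {} then 0 else if s = 0 then 1 else ennreal (ddiam d U powr s))"

definition delta_cover :: "('c \<Rightarrow> 'c \<Rightarrow> real) \<Rightarrow> real \<Rightarrow> 'c set \<Rightarrow> (nat \<Rightarrow> 'c set) \<Rightarrow> bool" where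
  "delta_cover d \<delta> E U = (E \<subseteq> (\<Union>k. U k) \<and> (\<forall>k. \<forall>x\<in>U k. \<forall>y\<in>U k. d x y \<le> \<delta>))"

definition hausdorff_measure :: "('c \<Rightarrow> 'c \<Rightarrow> real) \<Rightarrow> real \<Rightarrow> 'c set \<Rightarrow> ennreal" where
  "hausdorff_measure d s E =
     (SUP \<delta>\<in>{0<..}. INF U\<in>{U. delta_cover d \<delta> E U}. (\<Sum>k. diam_pow d s (U k)))"

definition hausdorff_dim :: "('c \<Rightarrow> 'c \<Rightarrow> real) \<Rightarrow> 'c set \<Rightarrow> ereal" where
  "hausdorff_dim d E = Inf {ereal s | s. s \<ge> 0 \<and> hausdorff_measure d s E = 0}"

end

theory Submission
  imports Defs
begin

(* Upper bound: a word w of length n codes a piece of the graph whose max-diameter is at most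
   a constant times r_w, the first coordinate being controlled too because c_i <= r_i. Covering
   the graph by these N^n pieces gives H^t = 0 whenever sum r_i^t < 1, i.e. for every t > t0.

   Lower bound: the graph projects 1-Lipschitz onto A_F, so it suffices that H^s(A_F) > 0 for
   s < s0. By the SOSC some word omega maps A_F into the open set U, so the maps f_w o f_omega
   with |w| = n have pairwise disjoint compact images of A_F, at positive mutual distance; for n
   large their ratios satisfy sum (c_w c_omega)^s >= 1, and the mass distribution principle on
   the code space of this sub-IFS bounds sum diam^s from below on every cover. *)

section \<open>Cylinders and weights of words\<close>

definition cylinder :: "nat list \<Rightarrow> (nat \<Rightarrow> nat) set" where
  "cylinder w = {u. \<forall>i<length w. u i = w ! i}"

lemma compact_sequences_in_finite:
  assumes "finite S"
  shows "compact {u::nat \<Rightarrow> 'a::topological_space. \<forall>i. u i \<in> S}"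
proof -
  have "{u::nat \<Rightarrow> 'a. \<forall>i. u i \<in> S} = PiE UNIV (\<lambda>_. S)"
    by (auto simp: PiE_def Pi_def extensional_def)
  moreover have "compactin (product_topology (\<lambda>_. euclidean) UNIV) (PiE UNIV (\<lambda>_::nat. S))"
    using assms by (simp add: compactin_PiE finite_imp_compact)
  ultimately show ?thesis by (simp add: euclidean_product_topology)
qed

lemma open_cylinder: "open (cylinder w)"
proof -
  have "open {u::nat \<Rightarrow> nat. \<forall>i\<in>{..<length w}. u (id i) \<in> {w ! i}}"
    by (rule product_topology_basis') (auto simp: open_discrete)
  moreover have "{u::nat \<Rightarrow> nat. \<forall>i\<in>{..<length w}. u (id i) \<in> {w ! i}} = cylinder w"
    by (auto simp: cylinder_def)
  ultimately show ?thesis by simp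
qed

lemma prefix_in_cylinder: "u \<in> cylinder (map u [0..<n])"
  by (simp add: cylinder_def)

definition word_weight :: "(nat \<Rightarrow> real) \<Rightarrow> nat list \<Rightarrow> real" where
  "word_weight p w = (\<Prod>i<length w. p (w ! i))"

lemma word_weight_Nil [simp]: "word_weight p [] = 1"
  by (simp add: word_weight_def)

lemma word_weight_Cons [simp]: "word_weight p (j # w) = p j * word_weight p w"
  unfolding word_weight_def length_Cons prod.lessThan_Suc_shift by simp

lemma word_weight_append: "word_weight p (v @ w) = word_weight p v * word_weight p w"
  by (induction v) auto

lemma word_weight_map: "word_weight p (map u [0..<n]) = (\<Prod>i<n. p (u i))"
  by (simp add: word_weight_def)

lemma word_weight_nonneg: "(\<And>j. j \<in> set w \<Longrightarrow> 0 \<le> p j) \<Longrightarrow> 0 \<le> word_weight p w"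
  unfolding word_weight_def by (rule prod_nonneg) auto

lemma word_weight_pos: "(\<And>j. j \<in> set w \<Longrightarrow> 0 < p j) \<Longrightarrow> 0 < word_weight p w"
  by (induction w) auto

lemma word_weight_mono:
  "(\<And>j. j \<in> set w \<Longrightarrow> 0 \<le> p j \<and> p j \<le> p' j) \<Longrightarrow> word_weight p w \<le> word_weight p' w"
  unfolding word_weight_def by (rule prod_mono) auto

lemma word_weight_le_power:
  "(\<And>j. j \<in> set w \<Longrightarrow> 0 \<le> p j \<and> p j \<le> b) \<Longrightarrow> word_weight p w \<le> b ^ length w"
  using word_weight_mono[of w p "\<lambda>_. b"] by (simp add: word_weight_def)

lemma word_weight_less_1:
  assumes "w \<noteq> []" "\<And>j. j \<in> set w \<Longrightarrow> 0 < p j \<and> p j < 1"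
  shows "word_weight p w < 1"
proof -
  define b where "b = Max (p ` set w)"
  obtain j where j: "j \<in> set w" using assms(1) by (cases w) auto
  have "p j \<le> b" unfolding b_def by (rule Max_ge) (use j in auto)
  then have "0 < b" using assms(2)[OF j] by linarith
  have "b < 1" unfolding b_def using j assms(2) by (subst Max_less_iff) auto
  have "word_weight p w \<le> b ^ length w"
    using assms by (intro word_weight_le_power) (auto simp: b_def less_imp_le)
  also have "\<dots> < 1" using \<open>b < 1\<close> \<open>0 < b\<close> assms(1) by (simp add: power_less_one_iff)
  finally show ?thesis .
qed

lemma word_weight_powr:
  "(\<And>j. j \<in> set w \<Longrightarrow> 0 \<le> p j) \<Longrightarrow> word_weight p w powr s = word_weight (\<lambda>j. p j powr s) w"
  unfolding word_weight_def by (simp add: prod_powr_distrib)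

lemma sum_word_weight_words:
  assumes "finite A"
  shows "(\<Sum>w\<in>{w. set w \<subseteq> A \<and> length w = n}. word_weight p w) = (\<Sum>j\<in>A. p j) ^ n"
proof (induction n)
  case 0
  have "{w. set w \<subseteq> A \<and> length w = 0} = {[]}" by auto
  then show ?case by simp
next
  case (Suc n)
  let ?W = "{w. set w \<subseteq> A \<and> length w = n}"
  have "(\<Sum>w\<in>{w. set w \<subseteq> A \<and> length w = Suc n}. word_weight p w)
      = (\<Sum>w\<in>(\<lambda>(w, j). j # w) ` (?W \<times> A). word_weight p w)"
    by (simp only: lists_length_Suc_eq)
  also have "\<dots> = (\<Sum>z\<in>?W \<times> A. word_weight p ((\<lambda>(w, j). j # w) z))"
    using sum.reindex[OF inj_split_Cons, of "word_weight p" "?W \<times> A"] by (simp add: o_def)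
  also have "\<dots> = (\<Sum>w\<in>?W. \<Sum>j\<in>A. p j * word_weight p w)"
    by (simp add: sum.cartesian_product split_def)
  also have "\<dots> = (\<Sum>j\<in>A. p j) ^ Suc n"
    using Suc by (simp add: sum_distrib_right[symmetric] sum_distrib_left[symmetric] mult.commute)
  finally show ?case .
qed

lemma sum_word_weight_powr_words:
  assumes "finite A" "\<And>j. j \<in> A \<Longrightarrow> 0 \<le> p j"
  shows "(\<Sum>w\<in>{w. set w \<subseteq> A \<and> length w = n}. word_weight p w powr s) = (\<Sum>j\<in>A. p j powr s) ^ n"
proof -
  have "(\<Sum>w\<in>{w. set w \<subseteq> A \<and> length w = n}. word_weight p w powr s)
      = (\<Sum>w\<in>{w. set w \<subseteq> A \<and> length w = n}. word_weight (\<lambda>j. p j powr s) w)"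
    using assms(2) by (intro sum.cong refl word_weight_powr) auto
  also have "\<dots> = (\<Sum>j\<in>A. p j powr s) ^ n" by (rule sum_word_weight_words[OF assms(1)])
  finally show ?thesis .
qed

lemma prefix_cover_weight_ge_1:
  assumes p: "\<And>j. j < m \<Longrightarrow> 0 \<le> p j" "(\<Sum>j<m. p j) = 1"
    and "finite R" "\<And>w. w \<in> R \<Longrightarrow> set w \<subseteq> {..<m}"
    and "\<And>v. length v = L \<Longrightarrow> set v \<subseteq> {..<m} \<Longrightarrow> \<exists>w\<in>R. \<exists>v'. v = w @ v'"
  shows "1 \<le> (\<Sum>w\<in>R. word_weight p w)"
  using assms(3-5)
proof (induction L arbitrary: R)
  case 0
  then have "[] \<in> R" by auto
  then have "word_weight p [] \<le> (\<Sum>w\<in>R. word_weight p w)"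
    using 0 p by (intro member_le_sum word_weight_nonneg) auto
  then show ?case by simp
next
  case (Suc L)
  show ?case
  proof (cases "[] \<in> R")
    case True
    then have "word_weight p [] \<le> (\<Sum>w\<in>R. word_weight p w)"
      using Suc.prems p by (intro member_le_sum word_weight_nonneg) auto
    then show ?thesis by simp
  next
    case False
    define R' where "R' j = {w. j # w \<in> R}" for j
    have fin: "finite (R' j)" for j
      using finite_vimageI[OF Suc.prems(1), of "Cons j"] by (simp add: R'_def vimage_def inj_def)
    have IH: "1 \<le> (\<Sum>w\<in>R' j. word_weight p w)" if "j < m" for j
    proof (rule Suc.IH[OF fin])
      show "set w \<subseteq> {..<m}" if "w \<in> R' j" for w
        using Suc.prems(2)[of "j # w"] that by (simp add: R'_def)
      show "\<exists>w\<in>R' j. \<exists>v'. v = w @ v'" if v: "length v = L" "set v \<subseteq> {..<m}" for v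
      proof -
        obtain w v' where "w \<in> R" "j # v = w @ v'"
          using Suc.prems(3)[of "j # v"] v \<open>j < m\<close> by auto
        with False show ?thesis by (cases w) (auto simp: R'_def)
      qed
    qed
    have "1 = (\<Sum>j<m. p j * 1)" using p by simp
    also have "\<dots> \<le> (\<Sum>j<m. p j * (\<Sum>w\<in>R' j. word_weight p w))"
      using IH p(1) by (intro sum_mono mult_left_mono) auto
    also have "\<dots> = (\<Sum>j<m. \<Sum>w\<in>Cons j ` R' j. word_weight p w)"
      by (subst sum.reindex) (auto simp: sum_distrib_left)
    also have "\<dots> = (\<Sum>w\<in>(\<Union>j<m. Cons j ` R' j). word_weight p w)"
      by (rule sum.UNION_disjoint[symmetric]) (auto simp: fin)
    also have "\<dots> \<le> (\<Sum>w\<in>R. word_weight p w)"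
      using Suc.prems p by (intro sum_mono2 word_weight_nonneg) (auto simp: R'_def)
    finally show ?thesis .
  qed
qed

lemma cylinder_cover_weight_ge_1:
  assumes p: "\<And>j. j < m \<Longrightarrow> 0 \<le> p j" "(\<Sum>j<m. p j) = 1"
    and words: "\<And>k. k \<in> I \<Longrightarrow> set (\<rho> k) \<subseteq> {..<m}"
    and cover: "{u. \<forall>i. u i < m} \<subseteq> (\<Union>k\<in>I. cylinder (\<rho> k))"
  obtains K where "K \<subseteq> I" "finite K" "1 \<le> (\<Sum>k\<in>K. word_weight p (\<rho> k))"
proof -
  have "compact {u::nat \<Rightarrow> nat. \<forall>i. u i < m}"
    using compact_sequences_in_finite[of "{..<m}"] by simp
  then obtain K where K: "K \<subseteq> I" "finite K" "{u. \<forall>i. u i < m} \<subseteq> (\<Union>k\<in>K. cylinder (\<rho> k))"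
    by (rule compactE_image[OF _ _ cover]) (use open_cylinder in auto)
  have "0 < m" using p(2) by (cases m) auto
  define L where "L = Max (insert 0 (length ` \<rho> ` K))"
  have "1 \<le> (\<Sum>w\<in>\<rho> ` K. word_weight p w)"
  proof (rule prefix_cover_weight_ge_1[OF p])
    show "finite (\<rho> ` K)" using K by simp
    show "set w \<subseteq> {..<m}" if "w \<in> \<rho> ` K" for w using that K(1) words by auto
    show "\<exists>w\<in>\<rho> ` K. \<exists>v'. v = w @ v'" if v: "length v = L" "set v \<subseteq> {..<m}" for v
    proof -
      define u where "u i = (if i < L then v ! i else 0)" for i
      have "\<forall>i. u i < m" using v \<open>0 < m\<close> by (auto simp: u_def subset_iff)
      then obtain k where k: "k \<in> K" "u \<in> cylinder (\<rho> k)" using K(3) by auto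
      have "length (\<rho> k) \<le> L" using k(1) K(2) by (auto simp: L_def)
      then have "take (length (\<rho> k)) v = \<rho> k"
        using k v by (intro nth_equalityI) (auto simp: cylinder_def u_def)
      then show ?thesis using k(1) by (metis append_take_drop_id image_eqI)
    qed
  qed
  also have "\<dots> \<le> (\<Sum>k\<in>K. word_weight p (\<rho> k))"
  proof -
    have "0 \<le> word_weight p (\<rho> k)" if "k \<in> K" for k
      using that K(1) words p(1) by (intro word_weight_nonneg) auto
    then show ?thesis using sum_image_le[OF K(2), of "word_weight p" \<rho>] by (simp add: o_def)
  qed
  finally show ?thesis using K that by blast
qed

section \<open>Hausdorff measure and mass distribution\<close>

lemma dist_le_ddiam:
  assumes "x \<in> U" "y \<in> U" "\<And>x y. x \<in> U \<Longrightarrow> y \<in> U \<Longrightarrow> d x y \<le> b"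
  shows "d x y \<le> ddiam d U"
proof -
  have "bdd_above {d x y |x y. x \<in> U \<and> y \<in> U}"
    by (rule bdd_aboveI[where M = b]) (use assms(3) in blast)
  then have "d x y \<le> Sup {d x y |x y. x \<in> U \<and> y \<in> U}"
    by (rule cSup_upper[rotated]) (use assms(1,2) in blast)
  then show ?thesis using assms(1) unfolding ddiam_def by auto
qed

lemma ddiam_le:
  assumes "U \<noteq> {}" "\<And>x y. x \<in> U \<Longrightarrow> y \<in> U \<Longrightarrow> d x y \<le> b"
  shows "ddiam d U \<le> b"
proof -
  obtain x where "x \<in> U" using assms(1) by blast
  then have "{d x y |x y. x \<in> U \<and> y \<in> U} \<noteq> {}" by blast
  then have "Sup {d x y |x y. x \<in> U \<and> y \<in> U} \<le> b"
    by (rule cSup_least) (use assms(2) in blast)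
  then show ?thesis using assms(1) by (simp add: ddiam_def)
qed

lemma hausdorff_measure_ge_INF:
  "(INF U\<in>{U. delta_cover d \<delta> E U}. \<Sum>k. diam_pow d s (U k)) \<le> hausdorff_measure d s E"
  if "0 < \<delta>"
  unfolding hausdorff_measure_def using that by (intro SUP_upper) simp

lemma hausdorff_measure_eq_0I:
  assumes "\<And>\<delta> e. 0 < \<delta> \<Longrightarrow> 0 < e \<Longrightarrow> \<exists>U. delta_cover d \<delta> E U \<and> (\<Sum>k. diam_pow d s (U k)) \<le> ennreal e"
  shows "hausdorff_measure d s E = 0"
proof -
  have "(INF U\<in>{U. delta_cover d \<delta> E U}. \<Sum>k. diam_pow d s (U k)) = 0" if "0 < \<delta>" for \<delta>
  proof -
    have "(INF U\<in>{U. delta_cover d \<delta> E U}. \<Sum>k. diam_pow d s (U k)) \<le> 0 + ennreal e"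
      if "0 < e" for e
      using assms[OF \<open>0 < \<delta>\<close> that] by (auto intro: INF_lower2)
    then have "(INF U\<in>{U. delta_cover d \<delta> E U}. \<Sum>k. diam_pow d s (U k)) \<le> 0"
      by (rule ennreal_le_epsilon) simp
    then show ?thesis by simp
  qed
  then show ?thesis unfolding hausdorff_measure_def by simp
qed

lemma hausdorff_measure_0_pos:
  assumes "E \<noteq> {}"
  shows "0 < hausdorff_measure d 0 E"
proof -
  have "1 \<le> (INF U\<in>{U. delta_cover d 1 E U}. \<Sum>k. diam_pow d 0 (U k))"
  proof (rule INF_greatest)
    fix U assume "U \<in> {U. delta_cover d 1 E U}"
    moreover obtain x where "x \<in> E" using assms by blast
    ultimately obtain k where "U k \<noteq> {}" by (force simp: delta_cover_def)
    moreover have "(\<Sum>k\<in>{k}. diam_pow d 0 (U k)) \<le> (\<Sum>k. diam_pow d 0 (U k))"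
      by (rule sum_le_suminf) auto
    ultimately show "1 \<le> (\<Sum>k. diam_pow d 0 (U k))" by (simp add: diam_pow_def)
  qed
  also have "\<dots> \<le> hausdorff_measure d 0 E" by (rule hausdorff_measure_ge_INF) simp
  finally show ?thesis by (rule order.strict_trans2[rotated]) simp
qed

lemma hausdorff_dim_le:
  assumes "0 \<le> t" "\<And>s. t < s \<Longrightarrow> hausdorff_measure d s E = 0"
  shows "hausdorff_dim d E \<le> ereal t"
proof (rule ereal_le_epsilon2)
  fix e :: real assume "0 < e"
  then have "hausdorff_dim d E \<le> ereal (t + e)"
    unfolding hausdorff_dim_def using assms by (intro Inf_lower) auto
  then show "hausdorff_dim d E \<le> ereal t + ereal e" by simp
qed

lemma hausdorff_dim_ge:
  assumes "E \<noteq> {}" "\<And>s. 0 < s \<Longrightarrow> s < t \<Longrightarrow> 0 < hausdorff_measure d s E"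
  shows "ereal t \<le> hausdorff_dim d E"
  unfolding hausdorff_dim_def
proof (rule Inf_greatest, clarify)
  fix s :: real assume "0 \<le> s" "hausdorff_measure d s E = 0"
  show "ereal t \<le> ereal s"
  proof (rule ccontr)
    assume "\<not> ereal t \<le> ereal s"
    then have "s < t" by simp
    moreover have "s \<noteq> 0" using hausdorff_measure_0_pos[OF assms(1), of d] \<open>hausdorff_measure d s E = 0\<close> by auto
    ultimately show False using assms(2)[of s] \<open>0 \<le> s\<close> \<open>hausdorff_measure d s E = 0\<close> by simp
  qed
qed

lemma separation_splits_cylinder:
  assumes "u \<in> F" "v \<in> F" "u \<noteq> (v :: nat \<Rightarrow> nat)"
  obtains n x y where "x \<in> F" "y \<in> F" "F \<subseteq> cylinder (map u [0..<n])"
    "\<forall>i<n. x i = y i" "x n \<noteq> y n"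
proof -
  obtain i0 where i0: "u i0 \<noteq> v i0" using assms(3) by (meson ext)
  define D where "D = {n. F \<subseteq> cylinder (map u [0..<n])}"
  have "0 \<in> D" by (simp add: D_def cylinder_def)
  have "D \<subseteq> {..i0}"
  proof
    fix n assume "n \<in> D"
    then have "v \<in> cylinder (map u [0..<n])" using assms(2) by (auto simp: D_def)
    then show "n \<in> {..i0}" using i0 by (auto simp: cylinder_def not_le[symmetric])
  qed
  then have "finite D" by (rule finite_subset) simp
  define n where "n = Max D"
  have "n \<in> D" unfolding n_def using \<open>finite D\<close> \<open>0 \<in> D\<close> by (intro Max_in) auto
  have "Suc n \<notin> D" using Max_ge[OF \<open>finite D\<close>, of "Suc n"] by (auto simp: n_def)
  then obtain z where z: "z \<in> F" "z \<notin> cylinder (map u [0..<Suc n])" by (auto simp: D_def)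
  have "z \<in> cylinder (map u [0..<n])" using \<open>n \<in> D\<close> z(1) by (auto simp: D_def)
  then have "\<forall>i<n. z i = u i" "z n \<noteq> u n"
    using z(2) by (auto simp: cylinder_def less_Suc_eq nth_append)
  then show thesis using that[of z u n] z(1) assms(1) \<open>n \<in> D\<close> by (auto simp: D_def)
qed

lemma short_cylinder_small_weight:
  assumes "\<forall>i. u i < m" "\<And>j. j < m \<Longrightarrow> 0 \<le> p j \<and> p j \<le> b" "b < 1" "0 < \<epsilon>"
  obtains w where "set w \<subseteq> {..<m}" "u \<in> cylinder w" "word_weight p w \<le> \<epsilon>"
proof -
  obtain n where n: "b ^ n < \<epsilon>" using real_arch_pow_inv[OF assms(4,3)] by blast
  have "word_weight p (map u [0..<n]) \<le> b ^ n"
    using assms(1,2) word_weight_le_power[of "map u [0..<n]" p b] by auto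
  then show thesis using that[of "map u [0..<n]"] n assms(1) prefix_in_cylinder by fastforce
qed

definition separated_coding ::
    "('z \<Rightarrow> 'z \<Rightarrow> real) \<Rightarrow> nat \<Rightarrow> (nat \<Rightarrow> real) \<Rightarrow> real \<Rightarrow> ((nat \<Rightarrow> nat) \<Rightarrow> 'z) \<Rightarrow> bool" where
  "separated_coding d m a \<gamma> \<Psi> \<longleftrightarrow>
     (\<forall>u v k. (\<forall>i. u i < m) \<longrightarrow> (\<forall>i. v i < m) \<longrightarrow> (\<forall>i<k. u i = v i) \<longrightarrow> u k \<noteq> v k \<longrightarrow>
        \<gamma> * (\<Prod>i<k. a (u i)) \<le> d (\<Psi> u) (\<Psi> v))"

lemma branching_prefix_weight_le:
  assumes sep: "separated_coding d m a \<gamma> \<Psi>"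
    and "0 < \<gamma>" "0 < s" "\<And>j. j < m \<Longrightarrow> 0 < a j"
    and p: "\<And>j. j < m \<Longrightarrow> 0 \<le> p j \<and> p j \<le> a j powr s"
    and F: "F \<subseteq> {u. \<forall>i. u i < m}" "u \<in> F" "v \<in> F" "u \<noteq> v" "\<Psi> ` F \<subseteq> U"
    and bounded: "\<And>x y. x \<in> U \<Longrightarrow> y \<in> U \<Longrightarrow> d x y \<le> \<delta>"
  obtains w where "set w \<subseteq> {..<m}" "F \<subseteq> cylinder w"
    "word_weight p w * \<gamma> powr s \<le> ddiam d U powr s"
proof -
  obtain n x y where xy: "x \<in> F" "y \<in> F" "F \<subseteq> cylinder (map u [0..<n])"
    "\<forall>i<n. x i = y i" "x n \<noteq> y n"
    using separation_splits_cylinder[OF F(2-4)] .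
  have codes: "\<forall>i. u i < m" "\<forall>i. x i < m" "\<forall>i. y i < m" using F(1,2) xy(1,2) by auto
  have "\<forall>i<n. x i = u i" using xy(1,3) by (auto simp: cylinder_def)
  then have "\<gamma> * (\<Prod>i<n. a (u i)) \<le> d (\<Psi> x) (\<Psi> y)"
    using sep codes xy(4,5) unfolding separated_coding_def by (metis (no_types, lifting) prod.cong lessThan_iff)
  also have "\<dots> \<le> ddiam d U" using xy(1,2) F(5) by (intro dist_le_ddiam[OF _ _ bounded]) auto
  finally have diam: "\<gamma> * (\<Prod>i<n. a (u i)) \<le> ddiam d U" .
  have a_nonneg: "0 \<le> (\<Prod>i<n. a (u i))" using codes assms(4) by (intro prod_nonneg) (auto intro: less_imp_le)
  have "word_weight p (map u [0..<n]) \<le> (\<Prod>i<n. a (u i) powr s)"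
    unfolding word_weight_map using codes p by (intro prod_mono) auto
  also have "\<dots> = (\<Prod>i<n. a (u i)) powr s" by (simp add: prod_powr_distrib)
  finally have "word_weight p (map u [0..<n]) * \<gamma> powr s \<le> (\<gamma> * (\<Prod>i<n. a (u i))) powr s"
    using \<open>0 < \<gamma>\<close> a_nonneg by (simp add: powr_mult mult_right_mono mult.commute)
  also have "\<dots> \<le> ddiam d U powr s"
    using diam \<open>0 < \<gamma>\<close> a_nonneg \<open>0 < s\<close> by (intro powr_mono2) auto
  finally show thesis using that[of "map u [0..<n]"] xy(3) codes(1) by auto
qed

lemma suminf_half_powers: "(\<Sum>k. (1/2::real) ^ (k + 2)) = 1/2"
proof -
  have "(\<Sum>k. (1/2::real) ^ (k + 2)) = (\<Sum>k. (1/2::real) ^ k * (1/4))"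
    by (simp add: power_add)
  also have "\<dots> = (\<Sum>k. (1/2::real) ^ k) * (1/4)"
    by (rule suminf_mult2[symmetric]) (auto intro: summable_geometric)
  finally show ?thesis by (simp add: suminf_geometric)
qed

lemma cover_set_word_exists:
  assumes sep: "separated_coding d m a \<gamma> \<Psi>"
    and "0 < \<gamma>" "0 < s" "\<And>j. j < m \<Longrightarrow> 0 < a j"
    and p: "\<And>j. j < m \<Longrightarrow> 0 \<le> p j \<and> p j \<le> a j powr s \<and> p j \<le> b" "b < 1" "0 < \<epsilon>"
    and bounded: "\<And>x y. x \<in> U \<Longrightarrow> y \<in> U \<Longrightarrow> d x y \<le> \<delta>"
    and nonempty: "{u. (\<forall>i. u i < m) \<and> \<Psi> u \<in> U} \<noteq> {}"
  obtains w where "set w \<subseteq> {..<m}" "{u. (\<forall>i. u i < m) \<and> \<Psi> u \<in> U} \<subseteq> cylinder w"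
    "word_weight p w * \<gamma> powr s \<le> ddiam d U powr s \<or> word_weight p w \<le> \<epsilon>"
proof -
  define F where "F = {u. (\<forall>i. u i < m) \<and> \<Psi> u \<in> U}"
  show thesis
  proof (cases "\<exists>u\<in>F. \<exists>v\<in>F. u \<noteq> v")
    case True
    then obtain u v where "u \<in> F" "v \<in> F" "u \<noteq> v" by blast
    obtain w where "set w \<subseteq> {..<m}" "F \<subseteq> cylinder w" "word_weight p w * \<gamma> powr s \<le> ddiam d U powr s"
      by (rule branching_prefix_weight_le[where p = p, OF sep \<open>0 < \<gamma>\<close> \<open>0 < s\<close> assms(4) _ _
            \<open>u \<in> F\<close> \<open>v \<in> F\<close> \<open>u \<noteq> v\<close> _ bounded])
        (use p(1) in \<open>auto simp: F_def\<close>)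
    then show thesis using that by (simp add: F_def)
  next
    case False
    obtain u where "u \<in> F" using nonempty by (auto simp: F_def)
    with False have "F = {u}" by blast
    moreover have "\<forall>i. u i < m" using \<open>u \<in> F\<close> by (simp add: F_def)
    then obtain w where "set w \<subseteq> {..<m}" "u \<in> cylinder w" "word_weight p w \<le> \<epsilon>"
      by (rule short_cylinder_small_weight[where p = p, OF _ _ p(2,3)]) (use p(1) in auto)
    ultimately show thesis using that by (simp add: F_def)
  qed
qed

lemma normalised_weights:
  fixes a :: "nat \<Rightarrow> real"
  assumes "0 < s" "\<And>j. j < m \<Longrightarrow> 0 < a j \<and> a j < 1" "1 \<le> (\<Sum>j<m. a j powr s)"
  obtains p b where "\<And>j. j < m \<Longrightarrow> 0 \<le> p j \<and> p j \<le> a j powr s \<and> p j \<le> b"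
    "(\<Sum>j<m. p j) = 1" "b < 1"
proof -
  define p where "p j = a j powr s / (\<Sum>j<m. a j powr s)" for j
  have "0 < m" using assms(3) by (cases m) auto
  define b where "b = Max (p ` {..<m})"
  have p: "0 \<le> p j \<and> p j \<le> a j powr s \<and> p j \<le> b" if "j < m" for j
    using assms(3) that by (auto simp: p_def b_def divide_le_eq_1 intro: divide_left_mono[of 1, simplified])
  have p_sum: "(\<Sum>j<m. p j) = 1"
    using assms(3) by (simp add: p_def sum_divide_distrib[symmetric])
  have "b < 1" unfolding b_def using \<open>0 < m\<close>
  proof (subst Max_less_iff, auto)
    fix j assume "j < m"
    then have "a j powr s < 1 powr s" using assms(2)[OF \<open>j < m\<close>] assms(1) by (intro powr_less_mono2) auto
    then show "p j < 1" using p[OF \<open>j < m\<close>] by simp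
  qed
  show thesis using that p p_sum \<open>b < 1\<close> by blast
qed

text \<open>Mass distribution principle: the normalised weights \<open>a\<^sub>j\<^sup>s / \<Sum>a\<^sub>i\<^sup>s\<close> define a measure on the
  code space, and a cover set meeting the images of two different codes has \<open>diam\<^sup>s\<close> at least
  \<open>\<gamma>\<^sup>s\<close> times the measure of a cylinder containing all codes it meets. The \<open>k\<close>-th cover set
  meeting a single code is paid for by a cylinder of measure at most \<open>2\<^sup>-\<^sup>k\<^sup>-\<^sup>2\<close>; compactness of
  the code space reduces to finitely many cylinders.\<close>
lemma separated_coding_cover_sum_ge:
  assumes sep: "separated_coding d m a \<gamma> \<Psi>"
    and "0 < \<gamma>" "0 < s"
    and a: "\<And>j. j < m \<Longrightarrow> 0 < a j \<and> a j < 1"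
    and S: "1 \<le> (\<Sum>j<m. a j powr s)"
    and cover: "\<And>u. \<forall>i. u i < m \<Longrightarrow> \<Psi> u \<in> (\<Union>k. U k)"
    and bounded: "\<And>k x y. x \<in> U k \<Longrightarrow> y \<in> U k \<Longrightarrow> d x y \<le> \<delta>"
  shows "ennreal (\<gamma> powr s / 2) \<le> (\<Sum>k. diam_pow d s (U k))"
proof -
  obtain p b where p: "\<And>j. j < m \<Longrightarrow> 0 \<le> p j \<and> p j \<le> a j powr s \<and> p j \<le> b"
      and p_sum: "(\<Sum>j<m. p j) = 1" and "b < 1"
    using normalised_weights[OF \<open>0 < s\<close> a S] by blast
  define F where "F k = {u. (\<forall>i. u i < m) \<and> \<Psi> u \<in> U k}" for k
  define good where "good w k \<longleftrightarrow> word_weight p w * \<gamma> powr s \<le> ddiam d (U k) powr s" for w k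
  have "\<exists>w. F k \<noteq> {} \<longrightarrow> set w \<subseteq> {..<m} \<and> F k \<subseteq> cylinder w \<and> (good w k \<or> word_weight p w \<le> (1/2) ^ (k + 2))" for k
  proof (cases "F k = {}")
    case False
    obtain w where "set w \<subseteq> {..<m}" "F k \<subseteq> cylinder w" "good w k \<or> word_weight p w \<le> (1/2) ^ (k + 2)"
      unfolding F_def good_def
      by (rule cover_set_word_exists[where \<epsilon> = "(1/2) ^ (k + 2)", OF sep \<open>0 < \<gamma>\<close> \<open>0 < s\<close> _ p \<open>b < 1\<close> _ bounded[of _ k]])
        (use a False in \<open>auto simp: F_def\<close>)
    then show ?thesis by blast
  qed simp
  then obtain \<rho> where \<rho>: "\<And>k. F k \<noteq> {} \<Longrightarrow> set (\<rho> k) \<subseteq> {..<m} \<and> F k \<subseteq> cylinder (\<rho> k) \<and>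
      (good (\<rho> k) k \<or> word_weight p (\<rho> k) \<le> (1/2) ^ (k + 2))"
    by metis
  have codes_covered: "{u. \<forall>i. u i < m} \<subseteq> (\<Union>k\<in>{k. F k \<noteq> {}}. cylinder (\<rho> k))"
  proof clarify
    fix u :: "nat \<Rightarrow> nat" assume "\<forall>i. u i < m"
    then obtain k where "u \<in> F k" using cover by (auto simp: F_def)
    then show "u \<in> (\<Union>k\<in>{k. F k \<noteq> {}}. cylinder (\<rho> k))" using \<rho>[of k] by blast
  qed
  obtain K where K: "K \<subseteq> {k. F k \<noteq> {}}" "finite K" "1 \<le> (\<Sum>k\<in>K. word_weight p (\<rho> k))"
    by (rule cylinder_cover_weight_ge_1[OF _ p_sum _ codes_covered]) (use p \<rho> in auto)
  let ?G = "{k. good (\<rho> k) k}"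
  have "(\<Sum>k\<in>K - ?G. word_weight p (\<rho> k)) \<le> (\<Sum>k\<in>K - ?G. (1/2) ^ (k + 2))"
    using K(1) \<rho> by (intro sum_mono) auto
  also have "\<dots> \<le> (\<Sum>k. (1/2::real) ^ (k + 2))"
    using K(2) by (intro sum_le_suminf) (auto intro!: summable_mult2 summable_geometric simp: power_add)
  also have "\<dots> = 1/2" by (rule suminf_half_powers)
  finally have "1/2 \<le> (\<Sum>k\<in>K \<inter> ?G. word_weight p (\<rho> k))"
    using K(3) sum.Int_Diff[OF K(2), of "\<lambda>k. word_weight p (\<rho> k)" ?G] by linarith
  then have "\<gamma> powr s / 2 \<le> (\<Sum>k\<in>K \<inter> ?G. word_weight p (\<rho> k)) * \<gamma> powr s"
    using mult_right_mono[of "1/2" _ "\<gamma> powr s"] by simp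
  also have "\<dots> = (\<Sum>k\<in>K \<inter> ?G. word_weight p (\<rho> k) * \<gamma> powr s)"
    by (simp add: sum_distrib_right)
  also have "\<dots> \<le> (\<Sum>k\<in>K \<inter> ?G. ddiam d (U k) powr s)"
    by (intro sum_mono) (simp add: good_def)
  finally have "ennreal (\<gamma> powr s / 2) \<le> (\<Sum>k\<in>K \<inter> ?G. ennreal (ddiam d (U k) powr s))"
    by (simp add: ennreal_leI)
  also have "\<dots> = (\<Sum>k\<in>K \<inter> ?G. diam_pow d s (U k))"
    using \<open>0 < s\<close> K(1) by (intro sum.cong) (auto simp: diam_pow_def F_def)
  also have "\<dots> \<le> (\<Sum>k. diam_pow d s (U k))"
    using K(2) by (intro sum_le_suminf) auto
  finally show ?thesis .
qed

lemma hausdorff_measure_pos_if_separated_coding: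
  assumes "separated_coding d m a \<gamma> \<Psi>" "0 < \<gamma>" "0 < s"
    and "\<And>j. j < m \<Longrightarrow> 0 < a j \<and> a j < 1" "1 \<le> (\<Sum>j<m. a j powr s)"
    and "\<And>u. \<forall>i. u i < m \<Longrightarrow> \<Psi> u \<in> E"
  shows "0 < hausdorff_measure d s E"
proof -
  have "ennreal (\<gamma> powr s / 2) \<le> (INF U\<in>{U. delta_cover d 1 E U}. \<Sum>k. diam_pow d s (U k))"
  proof (rule INF_greatest)
    fix U assume "U \<in> {U. delta_cover d 1 E U}"
    then have cover: "E \<subseteq> (\<Union>k. U k)" and bounded: "\<And>k x y. x \<in> U k \<Longrightarrow> y \<in> U k \<Longrightarrow> d x y \<le> 1"
      by (auto simp: delta_cover_def)
    show "ennreal (\<gamma> powr s / 2) \<le> (\<Sum>k. diam_pow d s (U k))"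
    proof (rule separated_coding_cover_sum_ge[OF assms(1-5) _ bounded])
      show "\<Psi> u \<in> (\<Union>k. U k)" if "\<forall>i. u i < m" for u using assms(6)[OF that] cover by blast
    qed
  qed
  also have "\<dots> \<le> hausdorff_measure d s E" by (rule hausdorff_measure_ge_INF) simp
  finally have "ennreal (\<gamma> powr s / 2) \<le> hausdorff_measure d s E" .
  moreover have "0 < ennreal (\<gamma> powr s / 2)" using \<open>0 < \<gamma>\<close> by simp
  ultimately show ?thesis by (rule order.strict_trans2[rotated])
qed

section \<open>Contractive iterated function systems\<close>

lemma LIMSEQ_dist_le:
  assumes "\<And>k. dist (X k) l \<le> b k" "b \<longlonglongrightarrow> 0"
  shows "X \<longlonglongrightarrow> l"
  using assms(2)
proof (rule metric_tendsto_imp_tendsto)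
  show "\<forall>\<^sub>F k in sequentially. dist (X k) l \<le> dist (b k) 0"
    using assms(1) by (intro always_eventually allI) (metis abs_ge_self dist_real_def diff_zero order_trans)
qed

lemma fcomp_add: "fcomp f \<sigma> (n + k) = fcomp f \<sigma> n \<circ> fcomp f (\<lambda>j. \<sigma> (j + n)) k"
  by (induction k) (auto simp: add.commute)

lemma fcomp_cong: "(\<And>i. i < n \<Longrightarrow> \<sigma> i = \<tau> i) \<Longrightarrow> fcomp f \<sigma> n = fcomp f \<tau> n"
  by (induction n) auto

lemma fcomp_Suc_left: "fcomp f \<sigma> (Suc k) = f (\<sigma> 0) \<circ> fcomp f (\<lambda>j. \<sigma> (Suc j)) k"
  using fcomp_add[of f \<sigma> 1 k] by simp

lemma code_space_shift: "\<sigma> \<in> code_space N \<Longrightarrow> (\<lambda>j. \<sigma> (j + n)) \<in> code_space N"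
  by (simp add: code_space_def)

lemma case_nat_code_space: "i \<in> {1..N} \<Longrightarrow> \<sigma> \<in> code_space N \<Longrightarrow> case_nat i \<sigma> \<in> code_space N"
  by (auto simp: code_space_def split: nat.splits)

locale contractive_ifs =
  fixes N :: nat and f :: "nat \<Rightarrow> 'a::complete_space \<Rightarrow> 'a" and lc :: "nat \<Rightarrow> real" and q :: real
  assumes N_pos: "1 \<le> N" and q_less_1: "q < 1"
    and lc: "\<And>i. i \<in> {1..N} \<Longrightarrow> 0 \<le> lc i \<and> lc i \<le> q"
    and lipschitz: "\<And>i x y. i \<in> {1..N} \<Longrightarrow> dist (f i x) (f i y) \<le> lc i * dist x y"
begin

lemma q_nonneg: "0 \<le> q" using lc[of 1] N_pos by auto

lemma power_q_tendsto_0: "(\<lambda>k. q ^ k * C) \<longlonglongrightarrow> 0"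
  by (intro tendsto_mult_left_zero LIMSEQ_power_zero) (use q_nonneg q_less_1 in simp)

lemma fcomp_dist_le_prod:
  "(\<And>i. i < k \<Longrightarrow> \<sigma> i \<in> {1..N}) \<Longrightarrow>
    dist (fcomp f \<sigma> k x) (fcomp f \<sigma> k y) \<le> (\<Prod>i<k. lc (\<sigma> i)) * dist x y"
proof (induction k arbitrary: x y)
  case (Suc k)
  have "0 \<le> (\<Prod>i<k. lc (\<sigma> i))" using Suc.prems lc by (intro prod_nonneg) auto
  have "dist (fcomp f \<sigma> (Suc k) x) (fcomp f \<sigma> (Suc k) y)
      \<le> (\<Prod>i<k. lc (\<sigma> i)) * dist (f (\<sigma> k) x) (f (\<sigma> k) y)"
    using Suc by simp
  also have "\<dots> \<le> (\<Prod>i<k. lc (\<sigma> i)) * (lc (\<sigma> k) * dist x y)"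
    using \<open>0 \<le> (\<Prod>i<k. lc (\<sigma> i))\<close> lipschitz Suc.prems by (intro mult_left_mono) auto
  finally show ?case by (simp add: mult.assoc)
qed simp

lemma prod_lc_le: "(\<And>i. i < k \<Longrightarrow> \<sigma> i \<in> {1..N}) \<Longrightarrow> (\<Prod>i<k. lc (\<sigma> i)) \<le> q ^ k"
  using prod_mono[of "{..<k}" "\<lambda>i. lc (\<sigma> i)" "\<lambda>_. q"] lc by auto

lemma fcomp_dist_le:
  assumes "\<And>i. i < k \<Longrightarrow> \<sigma> i \<in> {1..N}"
  shows "dist (fcomp f \<sigma> k x) (fcomp f \<sigma> k y) \<le> q ^ k * dist x y"
proof -
  have "(\<Prod>i<k. lc (\<sigma> i)) * dist x y \<le> q ^ k * dist x y"
    by (rule mult_right_mono[OF prod_lc_le[OF assms] zero_le_dist])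
  then show ?thesis using fcomp_dist_le_prod[OF assms] by (rule order_trans[rotated])
qed

definition max_step :: "'a \<Rightarrow> real" where
  "max_step x = Max ((\<lambda>i. dist (f i x) x) ` {1..N})"

lemma max_step_ge: "i \<in> {1..N} \<Longrightarrow> dist (f i x) x \<le> max_step x"
  unfolding max_step_def by (intro Max_ge) auto

lemma max_step_nonneg: "0 \<le> max_step x"
proof -
  have "dist (f 1 x) x \<le> max_step x" using N_pos by (intro max_step_ge) simp
  then show ?thesis by (rule order_trans[OF zero_le_dist])
qed

lemma dist_fcomp_le: "\<sigma> \<in> code_space N \<Longrightarrow> dist (fcomp f \<sigma> k x) x \<le> max_step x / (1 - q)"
proof (induction k arbitrary: \<sigma>)
  case 0 then show ?case using max_step_nonneg q_less_1 by simp
next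
  case (Suc k)
  let ?y = "fcomp f (\<lambda>j. \<sigma> (Suc j)) k x"
  have IH: "dist ?y x \<le> max_step x / (1 - q)"
    using Suc code_space_shift[of \<sigma> N 1] by simp
  have \<sigma>0: "\<sigma> 0 \<in> {1..N}" using Suc.prems by (simp add: code_space_def)
  have "dist (fcomp f \<sigma> (Suc k) x) x \<le> dist (f (\<sigma> 0) ?y) (f (\<sigma> 0) x) + dist (f (\<sigma> 0) x) x"
    unfolding fcomp_Suc_left o_apply by (rule dist_triangle)
  also have "\<dots> \<le> lc (\<sigma> 0) * dist ?y x + max_step x"
    using lipschitz[OF \<sigma>0] max_step_ge[OF \<sigma>0] by (rule add_mono)
  also have "\<dots> \<le> q * (max_step x / (1 - q)) + max_step x"
    using lc[OF \<sigma>0] IH by (intro add_mono mult_mono) auto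
  also have "\<dots> = max_step x / (1 - q)" using q_less_1 by (simp add: field_simps)
  finally show ?case .
qed

lemma dist_fcomp_fcomp_le:
  assumes "\<sigma> \<in> code_space N" "m \<le> n"
  shows "dist (fcomp f \<sigma> n x) (fcomp f \<sigma> m x) \<le> q ^ m * (max_step x / (1 - q))"
proof -
  obtain k where n: "n = m + k" using assms(2) le_Suc_ex by blast
  have "dist (fcomp f \<sigma> n x) (fcomp f \<sigma> m x)
      = dist (fcomp f \<sigma> m (fcomp f (\<lambda>j. \<sigma> (j + m)) k x)) (fcomp f \<sigma> m x)"
    by (simp add: n fcomp_add)
  also have "\<dots> \<le> q ^ m * dist (fcomp f (\<lambda>j. \<sigma> (j + m)) k x) x"
    using assms(1) by (intro fcomp_dist_le) (auto simp: code_space_def)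
  also have "\<dots> \<le> q ^ m * (max_step x / (1 - q))"
    using assms(1) q_nonneg by (intro mult_left_mono dist_fcomp_le code_space_shift) auto
  finally show ?thesis .
qed

lemma Cauchy_fcomp:
  assumes "\<sigma> \<in> code_space N"
  shows "Cauchy (\<lambda>k. fcomp f \<sigma> k x)"
proof (rule metric_CauchyI)
  fix e :: real assume "0 < e"
  define C where "C = max_step x / (1 - q)"
  obtain K where K: "q ^ K * C < e"
    using order_tendstoD(2)[OF power_q_tendsto_0 \<open>0 < e\<close>] by (auto simp: eventually_sequentially)
  have "q ^ m * C \<le> q ^ K * C" if "K \<le> m" for m
    using that q_nonneg q_less_1 max_step_nonneg
    by (intro mult_right_mono power_decreasing) (auto simp: C_def)
  then have "dist (fcomp f \<sigma> m x) (fcomp f \<sigma> n x) < e" if "K \<le> m" "K \<le> n" for m n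
    using that K dist_fcomp_fcomp_le[OF assms, of m n x] dist_fcomp_fcomp_le[OF assms, of n m x]
    by (cases "m \<le> n") (fastforce simp: dist_commute C_def)+
  then show "\<exists>M. \<forall>m\<ge>M. \<forall>n\<ge>M. dist (fcomp f \<sigma> m x) (fcomp f \<sigma> n x) < e" by blast
qed

lemma address_LIMSEQ:
  assumes "\<sigma> \<in> code_space N"
  shows "(\<lambda>k. fcomp f \<sigma> k x) \<longlonglongrightarrow> address f \<sigma>"
proof -
  obtain y where y: "(\<lambda>k. fcomp f \<sigma> k x) \<longlonglongrightarrow> y"
    using Cauchy_convergent[OF Cauchy_fcomp[OF assms]] by (auto simp: convergent_def)
  have all: "(\<lambda>k. fcomp f \<sigma> k z) \<longlonglongrightarrow> y" for z
  proof (rule LIMSEQ_dist_le)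
    show "dist (fcomp f \<sigma> k z) y \<le> q ^ k * dist z x + dist (fcomp f \<sigma> k x) y" for k
      using dist_triangle[of "fcomp f \<sigma> k z" y "fcomp f \<sigma> k x"]
        fcomp_dist_le[of k \<sigma> z x] assms by (auto simp: code_space_def)
    show "(\<lambda>k. q ^ k * dist z x + dist (fcomp f \<sigma> k x) y) \<longlonglongrightarrow> 0"
      using power_q_tendsto_0 tendsto_dist_iff[THEN iffD1, OF y] by (intro tendsto_add_zero)
  qed
  have "address f \<sigma> = y"
    unfolding address_def by (rule the_equality) (use all y LIMSEQ_unique in blast)+
  then show ?thesis using all by simp
qed

lemma address_shift:
  assumes "\<sigma> \<in> code_space N"
  shows "address f \<sigma> = fcomp f \<sigma> n (address f (\<lambda>j. \<sigma> (j + n)))"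
proof -
  let ?\<tau> = "\<lambda>j. \<sigma> (j + n)"
  have "(\<lambda>k. fcomp f \<sigma> (k + n) x) \<longlonglongrightarrow> address f \<sigma>" for x
    using LIMSEQ_ignore_initial_segment[OF address_LIMSEQ[OF assms]] by simp
  moreover have "(\<lambda>k. fcomp f \<sigma> (k + n) x) \<longlonglongrightarrow> fcomp f \<sigma> n (address f ?\<tau>)" for x
  proof (rule LIMSEQ_dist_le)
    show "dist (fcomp f \<sigma> (k + n) x) (fcomp f \<sigma> n (address f ?\<tau>))
        \<le> q ^ n * dist (fcomp f ?\<tau> k x) (address f ?\<tau>)" for k
      using assms by (simp add: add.commute[of k] fcomp_add fcomp_dist_le code_space_def)
    show "(\<lambda>k. q ^ n * dist (fcomp f ?\<tau> k x) (address f ?\<tau>)) \<longlonglongrightarrow> 0"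
      using address_LIMSEQ[OF code_space_shift[OF assms]]
      by (intro tendsto_mult_right_zero) (simp add: tendsto_dist_iff[symmetric])
  qed
  ultimately show ?thesis using LIMSEQ_unique by blast
qed

lemma address_case_nat:
  assumes "i \<in> {1..N}" "\<sigma> \<in> code_space N"
  shows "address f (case_nat i \<sigma>) = f i (address f \<sigma>)"
  using address_shift[OF case_nat_code_space[OF assms], of 1] by simp

text \<open>Any base point works; \<open>undefined\<close> is just a fixed point of \<open>'a\<close>.\<close>
definition diam_bound :: real where
  "diam_bound = 2 * (max_step undefined / (1 - q))"

lemma diam_bound_nonneg: "0 \<le> diam_bound"
  using max_step_nonneg q_less_1 by (simp add: diam_bound_def)

lemma dist_address_le_diam_bound:
  assumes "\<sigma> \<in> code_space N" "\<tau> \<in> code_space N"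
  shows "dist (address f \<sigma>) (address f \<tau>) \<le> diam_bound"
proof -
  have near: "dist (address f \<rho>) undefined \<le> max_step undefined / (1 - q)"
    if "\<rho> \<in> code_space N" for \<rho>
    using tendsto_dist[OF address_LIMSEQ[OF that] tendsto_const]
    by (rule LIMSEQ_le_const2) (use that dist_fcomp_le in auto)
  show ?thesis
    using dist_triangle2[of "address f \<sigma>" "address f \<tau>" undefined] near[OF assms(1)] near[OF assms(2)]
    by (simp add: diam_bound_def)
qed

lemma dist_address_le_prod:
  assumes "\<sigma> \<in> code_space N" "\<tau> \<in> code_space N" "\<And>i. i < n \<Longrightarrow> \<sigma> i = \<tau> i"
  shows "dist (address f \<sigma>) (address f \<tau>) \<le> (\<Prod>i<n. lc (\<sigma> i)) * diam_bound"
proof -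
  have "dist (address f \<sigma>) (address f \<tau>) =
      dist (fcomp f \<sigma> n (address f (\<lambda>j. \<sigma> (j + n)))) (fcomp f \<sigma> n (address f (\<lambda>j. \<tau> (j + n))))"
    using address_shift[OF assms(1), of n] address_shift[OF assms(2), of n] fcomp_cong[of n \<tau> \<sigma> f] assms(3)
    by simp
  also have "\<dots> \<le> (\<Prod>i<n. lc (\<sigma> i)) * dist (address f (\<lambda>j. \<sigma> (j + n))) (address f (\<lambda>j. \<tau> (j + n)))"
    using assms(1) by (intro fcomp_dist_le_prod) (auto simp: code_space_def)
  also have "\<dots> \<le> (\<Prod>i<n. lc (\<sigma> i)) * diam_bound"
    using assms lc by (intro mult_left_mono dist_address_le_diam_bound code_space_shift prod_nonneg)
      (auto simp: code_space_def)
  finally show ?thesis .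
qed

lemma dist_address_le_power:
  assumes "\<sigma> \<in> code_space N" "\<tau> \<in> code_space N" "\<And>i. i < n \<Longrightarrow> \<sigma> i = \<tau> i"
  shows "dist (address f \<sigma>) (address f \<tau>) \<le> q ^ n * diam_bound"
  using dist_address_le_prod[OF assms] prod_lc_le[of n \<sigma>] assms(1) diam_bound_nonneg
  by (smt (verit) code_space_def mem_Collect_eq mult_right_mono)

end

lemma lex_le_antisym: "lex_le \<sigma> \<tau> \<Longrightarrow> lex_le \<tau> \<sigma> \<Longrightarrow> \<sigma> = \<tau>"
  unfolding lex_le_def lex_less_def
  by (metis linorder_neqE_nat not_less_iff_gr_or_eq)

fun greedy :: "(nat list \<Rightarrow> nat) \<Rightarrow> nat \<Rightarrow> nat list" where
  "greedy pick 0 = []"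
| "greedy pick (Suc k) = greedy pick k @ [pick (greedy pick k)]"

lemma length_greedy [simp]: "length (greedy pick k) = k"
  by (induction k) auto

lemma greedy_nth: "i < k \<Longrightarrow> greedy pick k ! i = pick (greedy pick i)"
  by (induction k) (auto simp: nth_append less_Suc_eq)

lemma code_space_if_prefixes_realised:
  assumes "S \<subseteq> code_space N" "\<And>k. \<exists>\<sigma>\<in>S. \<forall>i<k. \<sigma> i = \<gamma> i"
  shows "\<gamma> \<in> code_space N"
  unfolding code_space_def
proof (intro CollectI allI)
  fix k
  obtain \<sigma> where "\<sigma> \<in> S" "\<forall>i<Suc k. \<sigma> i = \<gamma> i" using assms(2) by blast
  then have "\<gamma> k = \<sigma> k" "\<sigma> \<in> code_space N" using assms(1) by auto
  then show "\<gamma> k \<in> {1..N}" by (simp add: code_space_def)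
qed

text \<open>Greedy construction: at each step pick the largest symbol admissible after the prefix so far.\<close>
lemma lex_greatest_exists:
  assumes S: "S \<subseteq> code_space N" "S \<noteq> {}"
    and closed: "\<And>\<gamma>. \<gamma> \<in> code_space N \<Longrightarrow> (\<And>k. \<exists>\<sigma>\<in>S. \<forall>i<k. \<sigma> i = \<gamma> i) \<Longrightarrow> \<gamma> \<in> S"
  obtains \<gamma> where "\<gamma> \<in> S" "\<And>\<tau>. \<tau> \<in> S \<Longrightarrow> lex_le \<tau> \<gamma>"
proof -
  define D where "D w = {\<sigma> (length w) | \<sigma>. \<sigma> \<in> S \<and> (\<forall>i<length w. \<sigma> i = w ! i)}" for w
  have "D w \<subseteq> {1..N}" for w
  proof
    fix d assume "d \<in> D w"
    then obtain \<sigma> where "\<sigma> \<in> S" "d = \<sigma> (length w)" by (auto simp: D_def)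
    then show "d \<in> {1..N}" using S(1) by (auto simp: code_space_def)
  qed
  then have fin: "finite (D w)" for w by (rule finite_subset) simp
  define \<gamma> where "\<gamma> k = Max (D (greedy (\<lambda>w. Max (D w)) k))" for k
  let ?w = "greedy (\<lambda>w. Max (D w))"
  have prefix: "?w k ! i = \<gamma> i" if "i < k" for i k
    using that by (simp add: greedy_nth \<gamma>_def)
  have realised: "\<exists>\<sigma>\<in>S. \<forall>i<k. \<sigma> i = \<gamma> i" for k
  proof (induction k)
    case 0 then show ?case using S(2) by auto
  next
    case (Suc k)
    then obtain \<sigma> where "\<sigma> \<in> S" "\<forall>i<k. \<sigma> i = ?w k ! i" using prefix by auto
    then have "D (?w k) \<noteq> {}" by (auto simp: D_def)
    then have "\<gamma> k \<in> D (?w k)" unfolding \<gamma>_def using fin by (rule Max_in[rotated])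
    then obtain \<sigma>' where "\<sigma>' \<in> S" "\<forall>i<k. \<sigma>' i = ?w k ! i" "\<sigma>' k = \<gamma> k"
      by (auto simp: D_def)
    then show ?case using prefix by (auto simp: less_Suc_eq)
  qed
  have "\<gamma> \<in> S" using closed realised code_space_if_prefixes_realised[OF S(1) realised] by blast
  moreover have "lex_le \<tau> \<gamma>" if "\<tau> \<in> S" for \<tau>
  proof (cases "\<tau> = \<gamma>")
    case False
    then obtain k where k: "\<tau> k \<noteq> \<gamma> k" "\<forall>i<k. \<tau> i = \<gamma> i"
      using exists_least_iff[of "\<lambda>k. \<tau> k \<noteq> \<gamma> k"] by (metis ext)
    then have "\<tau> k \<in> D (?w k)" using that prefix by (auto simp: D_def)
    then have "\<tau> k < \<gamma> k" using k(1) Max_ge[OF fin] by (force simp: \<gamma>_def)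
    then show ?thesis using k(2) by (auto simp: lex_le_def lex_less_def)
  qed (simp add: lex_le_def)
  ultimately show thesis using that by blast
qed

context contractive_ifs
begin

lemma address_image_nonempty: "address f ` code_space N \<noteq> {}"
proof -
  have "(\<lambda>_. 1) \<in> code_space N" using N_pos by (simp add: code_space_def)
  then show ?thesis by blast
qed

lemma address_image_invariant:
  "address f ` code_space N = (\<Union>i\<in>{1..N}. f i ` address f ` code_space N)"
proof
  show "address f ` code_space N \<subseteq> (\<Union>i\<in>{1..N}. f i ` address f ` code_space N)"
  proof
    fix x assume "x \<in> address f ` code_space N"
    then obtain \<sigma> where \<sigma>: "\<sigma> \<in> code_space N" "x = address f \<sigma>" by blast
    then have "x = f (\<sigma> 0) (address f (\<lambda>j. \<sigma> (Suc j)))"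
      using address_shift[OF \<sigma>(1), of 1] by simp
    moreover have "(\<lambda>j. \<sigma> (Suc j)) \<in> code_space N" "\<sigma> 0 \<in> {1..N}"
      using \<sigma>(1) by (auto simp: code_space_def)
    ultimately show "x \<in> (\<Union>i\<in>{1..N}. f i ` address f ` code_space N)" by blast
  qed
  show "(\<Union>i\<in>{1..N}. f i ` address f ` code_space N) \<subseteq> address f ` code_space N"
  proof clarify
    fix i \<sigma> assume "i \<in> {1..N}" "\<sigma> \<in> code_space N"
    then show "f i (address f \<sigma>) \<in> address f ` code_space N"
      using address_case_nat case_nat_code_space by (metis image_eqI)
  qed
qed

lemma continuous_on_address: "continuous_on (code_space N) (address f)"
  unfolding continuous_on_topological
proof (intro ballI allI impI)
  fix \<sigma> B assume \<sigma>: "\<sigma> \<in> code_space N" and B: "open B" "address f \<sigma> \<in> B"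
  obtain e where e: "0 < e" "ball (address f \<sigma>) e \<subseteq> B" using B openE by blast
  obtain n where n: "q ^ n * diam_bound < e"
    using order_tendstoD(2)[OF power_q_tendsto_0 e(1)] by (auto simp: eventually_sequentially)
  have "address f \<tau> \<in> B" if "\<tau> \<in> code_space N" "\<tau> \<in> cylinder (map \<sigma> [0..<n])" for \<tau>
  proof -
    have "dist (address f \<sigma>) (address f \<tau>) \<le> q ^ n * diam_bound"
      using that by (intro dist_address_le_power[OF \<sigma>]) (auto simp: cylinder_def)
    then show ?thesis using n e(2) by auto
  qed
  then show "\<exists>A. open A \<and> \<sigma> \<in> A \<and> (\<forall>\<tau>\<in>code_space N. \<tau> \<in> A \<longrightarrow> address f \<tau> \<in> B)"
    using open_cylinder prefix_in_cylinder by blast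
qed

lemma compact_address_image: "compact (address f ` code_space N)"
proof (rule compact_continuous_image[OF continuous_on_address])
  show "compact (code_space N)"
    using compact_sequences_in_finite[of "{1..N}"] by (simp add: code_space_def)
qed

lemma address_in_closed_invariant:
  assumes "closed A" "a \<in> A" "\<And>i. i \<in> {1..N} \<Longrightarrow> f i ` A \<subseteq> A" "\<sigma> \<in> code_space N"
  shows "address f \<sigma> \<in> A"
proof -
  have "fcomp f \<sigma> k y \<in> A" if "y \<in> A" for k y
    using that by (induction k arbitrary: y) (use assms(3,4) in \<open>auto simp: code_space_def\<close>)
  then show ?thesis using closed_sequentially[OF assms(1) _ address_LIMSEQ[OF assms(4)]] assms(2) by blast
qed

lemma bounded_invariant_subset_address_image:
  assumes "bounded A" "A \<subseteq> (\<Union>i\<in>{1..N}. f i ` A)" "a \<in> A"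
  shows "a \<in> address f ` code_space N"
proof -
  have "\<exists>p. fst p \<in> {1..N} \<and> snd p \<in> A \<and> y = f (fst p) (snd p)" if "y \<in> A" for y
  proof -
    obtain i z where "i \<in> {1..N}" "z \<in> A" "y = f i z" using assms(2) \<open>y \<in> A\<close> by blast
    then show ?thesis by (intro exI[of _ "(i, z)"]) simp
  qed
  then obtain pre where pre: "\<And>y. y \<in> A \<Longrightarrow> fst (pre y) \<in> {1..N} \<and> snd (pre y) \<in> A \<and>
      y = f (fst (pre y)) (snd (pre y))"
    by metis
  define y where "y k = ((\<lambda>y. snd (pre y)) ^^ k) a" for k
  define \<sigma> where "\<sigma> k = fst (pre (y k))" for k
  have yA: "y k \<in> A" for k by (induction k) (use assms(3) pre in \<open>auto simp: y_def\<close>)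
  have \<sigma>: "\<sigma> \<in> code_space N" using yA pre by (simp add: \<sigma>_def code_space_def)
  have unwind: "fcomp f \<sigma> k (y k) = a" for k
  proof (induction k)
    case (Suc k)
    have "f (\<sigma> k) (y (Suc k)) = y k" using pre[OF yA[of k]] by (simp add: \<sigma>_def y_def)
    then show ?case using Suc by simp
  qed (simp add: y_def)
  obtain D where D: "\<forall>z\<in>A. dist a z \<le> D" using assms(1) bounded_any_center by blast
  have "(\<lambda>k. fcomp f \<sigma> k a) \<longlonglongrightarrow> a"
  proof (rule LIMSEQ_dist_le[OF _ power_q_tendsto_0])
    show "dist (fcomp f \<sigma> k a) a \<le> q ^ k * D" for k
    proof -
      have "dist (fcomp f \<sigma> k a) a = dist (fcomp f \<sigma> k a) (fcomp f \<sigma> k (y k))"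
        by (simp add: unwind)
      also have "\<dots> \<le> q ^ k * dist a (y k)"
        using \<sigma> by (intro fcomp_dist_le) (simp add: code_space_def)
      also have "\<dots> \<le> q ^ k * D" using D yA q_nonneg by (intro mult_left_mono) auto
      finally show ?thesis .
    qed
  qed
  then have "a = address f \<sigma>" using address_LIMSEQ[OF \<sigma>] LIMSEQ_unique by blast
  then show ?thesis using \<sigma> by blast
qed

lemma attractor_eq_address_image: "attractor N f = address f ` code_space N"
  unfolding attractor_def
proof (rule the_equality)
  show "address f ` code_space N \<noteq> {} \<and> compact (address f ` code_space N) \<and>
      address f ` code_space N = (\<Union>i\<in>{1..N}. f i ` address f ` code_space N)"
    using address_image_nonempty compact_address_image address_image_invariant by blast
  fix A assume A: "A \<noteq> {} \<and> compact A \<and> A = (\<Union>i\<in>{1..N}. f i ` A)"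
  then obtain a where "a \<in> A" by blast
  show "A = address f ` code_space N"
  proof
    show "address f ` code_space N \<subseteq> A"
      using address_in_closed_invariant[OF compact_imp_closed \<open>a \<in> A\<close>] A by blast
    show "A \<subseteq> address f ` code_space N"
    proof
      fix a' assume "a' \<in> A"
      show "a' \<in> address f ` code_space N"
        by (rule bounded_invariant_subset_address_image[OF compact_imp_bounded _ \<open>a' \<in> A\<close>])
          (use A in auto)
    qed
  qed
qed

lemma tops_address:
  assumes "x \<in> address f ` code_space N"
  shows "tops N f x \<in> code_space N" "address f (tops N f x) = x"
proof -
  define S where "S = {\<sigma> \<in> code_space N. address f \<sigma> = x}"
  have "\<gamma> \<in> S" if \<gamma>: "\<gamma> \<in> code_space N" and realised: "\<And>k. \<exists>\<sigma>\<in>S. \<forall>i<k. \<sigma> i = \<gamma> i" for \<gamma>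
  proof -
    have "dist x (address f \<gamma>) \<le> q ^ k * diam_bound" for k
    proof -
      obtain \<sigma> where "\<sigma> \<in> S" "\<forall>i<k. \<sigma> i = \<gamma> i" using realised by blast
      then show ?thesis using dist_address_le_power[of \<sigma> \<gamma> k] \<gamma> by (simp add: S_def)
    qed
    then have "dist x (address f \<gamma>) \<le> 0"
      by (intro LIMSEQ_le_const[OF power_q_tendsto_0]) auto
    then show ?thesis using \<gamma> by (simp add: S_def)
  qed
  moreover have "S \<subseteq> code_space N" "S \<noteq> {}" using assms by (auto simp: S_def)
  ultimately obtain \<gamma> where \<gamma>: "\<gamma> \<in> S" "\<And>\<tau>. \<tau> \<in> S \<Longrightarrow> lex_le \<tau> \<gamma>"
    using lex_greatest_exists by metis
  have "tops N f x = \<gamma>"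
    unfolding tops_def
  proof (rule the_equality)
    show "\<gamma> \<in> code_space N \<and> address f \<gamma> = x \<and> (\<forall>\<tau>\<in>code_space N. address f \<tau> = x \<longrightarrow> lex_le \<tau> \<gamma>)"
      using \<gamma> by (auto simp: S_def)
  qed (use \<gamma> lex_le_antisym in \<open>auto simp: S_def\<close>)
  then show "tops N f x \<in> code_space N" "address f (tops N f x) = x" using \<gamma>(1) by (auto simp: S_def)
qed

end

section \<open>Similarities under the strong open set condition\<close>

definition word_map :: "(nat \<Rightarrow> 'a \<Rightarrow> 'a) \<Rightarrow> nat list \<Rightarrow> 'a \<Rightarrow> 'a" where
  "word_map f w = fcomp f (\<lambda>i. w ! i) (length w)"

lemma word_map_Nil [simp]: "word_map f [] = id"
  by (simp add: word_map_def)

lemma word_map_Cons: "word_map f (j # w) = f j \<circ> word_map f w"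
  unfolding word_map_def by (simp only: length_Cons fcomp_Suc_left) simp

lemma word_map_append: "word_map f (v @ w) = word_map f v \<circ> word_map f w"
  by (induction v) (auto simp: word_map_Cons)

lemma fcomp_eq_word_map: "(\<And>i. i < length w \<Longrightarrow> \<sigma> i = w ! i) \<Longrightarrow> fcomp f \<sigma> (length w) = word_map f w"
  unfolding word_map_def by (rule fcomp_cong) simp

context contractive_ifs
begin

lemma address_prefix:
  assumes "\<sigma> \<in> code_space N" "\<And>i. i < length w \<Longrightarrow> \<sigma> i = w ! i"
  shows "address f \<sigma> = word_map f w (address f (\<lambda>j. \<sigma> (j + length w)))"
  using address_shift[OF assms(1), of "length w"] fcomp_eq_word_map[OF assms(2), of f] by simp

text \<open>Prefixing the address of a point of \<open>V \<inter> A\<close> to all codes maps the attractor into \<open>V\<close>.\<close>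
lemma word_map_attractor_into_open:
  assumes "open V" "a \<in> V" "a \<in> attractor N f"
  obtains \<omega> where "set \<omega> \<subseteq> {1..N}" "word_map f \<omega> ` attractor N f \<subseteq> V"
proof -
  obtain \<alpha> where \<alpha>: "\<alpha> \<in> code_space N" "a = address f \<alpha>"
    using assms(3) attractor_eq_address_image by auto
  obtain \<epsilon> where \<epsilon>: "0 < \<epsilon>" "ball a \<epsilon> \<subseteq> V" using assms(1,2) openE by blast
  obtain n where n: "q ^ n * diam_bound < \<epsilon>"
    using order_tendstoD(2)[OF power_q_tendsto_0 \<epsilon>(1)] by (auto simp: eventually_sequentially)
  define \<omega> where "\<omega> = map \<alpha> [0..<n]"
  have "word_map f \<omega> x \<in> V" if x: "x \<in> attractor N f" for x
  proof -
    obtain \<beta> where \<beta>: "\<beta> \<in> code_space N" "x = address f \<beta>"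
      using x attractor_eq_address_image by auto
    define \<gamma> where "\<gamma> i = (if i < n then \<alpha> i else \<beta> (i - n))" for i
    have \<gamma>: "\<gamma> \<in> code_space N" using \<alpha> \<beta> by (auto simp: \<gamma>_def code_space_def)
    have "(\<lambda>j. \<gamma> (j + length \<omega>)) = \<beta>" by (simp add: \<gamma>_def \<omega>_def)
    then have "address f \<gamma> = word_map f \<omega> x"
      using address_prefix[OF \<gamma>, of \<omega>] \<beta>(2) by (simp add: \<gamma>_def \<omega>_def)
    moreover have "dist (address f \<alpha>) (address f \<gamma>) \<le> q ^ n * diam_bound"
      by (rule dist_address_le_power[OF \<alpha>(1) \<gamma>]) (simp add: \<gamma>_def)
    ultimately show ?thesis using \<alpha>(2) n \<epsilon>(2) by auto
  qed
  moreover have "set \<omega> \<subseteq> {1..N}" using \<alpha>(1) by (auto simp: \<omega>_def code_space_def)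
  ultimately show thesis using that by blast
qed

end

locale similarity_ifs = contractive_ifs +
  assumes lc_pos: "\<And>i. i \<in> {1..N} \<Longrightarrow> 0 < lc i"
    and similarity: "\<And>i x y. i \<in> {1..N} \<Longrightarrow> dist (f i x) (f i y) = lc i * dist x y"
begin

lemma lc_bounds: "i \<in> {1..N} \<Longrightarrow> 0 < lc i \<and> lc i < 1"
  using lc_pos lc q_less_1 by fastforce

lemma word_weight_lc_pos: "set w \<subseteq> {1..N} \<Longrightarrow> 0 < word_weight lc w"
  using lc_pos by (intro word_weight_pos) auto

lemma dist_word_map:
  "set w \<subseteq> {1..N} \<Longrightarrow> dist (word_map f w x) (word_map f w y) = word_weight lc w * dist x y"
  by (induction w arbitrary: x y) (auto simp: word_map_Cons similarity)

lemma word_map_image_subset: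
  assumes "\<And>i. i \<in> {1..N} \<Longrightarrow> f i ` V \<subseteq> V" "set w \<subseteq> {1..N}"
  shows "word_map f w ` V \<subseteq> V"
  using assms(2) by (induction w) (use assms(1) in \<open>auto simp: word_map_Cons\<close>)

lemma word_map_images_disjoint:
  assumes V: "\<And>i. i \<in> {1..N} \<Longrightarrow> f i ` V \<subseteq> V"
    and disjoint: "\<And>i j. i \<in> {1..N} \<Longrightarrow> j \<in> {1..N} \<Longrightarrow> i \<noteq> j \<Longrightarrow> f i ` V \<inter> f j ` V = {}"
  shows "set w \<subseteq> {1..N} \<Longrightarrow> set w' \<subseteq> {1..N} \<Longrightarrow> length w = length w' \<Longrightarrow> w \<noteq> w'
    \<Longrightarrow> word_map f w ` V \<inter> word_map f w' ` V = {}"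
proof (induction w arbitrary: w')
  case (Cons i w)
  then obtain j w'' where w': "w' = j # w''" by (cases w') auto
  have ij: "i \<in> {1..N}" "j \<in> {1..N}" using Cons.prems w' by auto
  have images: "word_map f (i # w) ` V \<subseteq> f i ` V" "word_map f w' ` V \<subseteq> f j ` V"
    using word_map_image_subset[OF V] Cons.prems w' by (auto simp: word_map_Cons image_comp[symmetric])
  show ?case
  proof (cases "i = j")
    case False
    then show ?thesis using images disjoint[OF ij] by blast
  next
    case True
    have "word_map f w ` V \<inter> word_map f w'' ` V = {}"
      using Cons w' True by auto
    moreover have "x = y" if "f i x = f i y" for x y
      using similarity[OF ij(1), of x y] lc_pos[OF ij(1)] that by simp
    ultimately show ?thesis using True w' by (auto simp: word_map_Cons)
  qed
qed simp

end

lemma compact_disjoint_gap: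
  fixes S T :: "'a::metric_space set"
  assumes "compact S" "compact T" "S \<inter> T = {}"
  shows "\<exists>\<delta>>0. \<forall>x\<in>S. \<forall>y\<in>T. \<delta> \<le> dist x y"
proof (cases "S = {} \<or> T = {}")
  case True
  then show ?thesis by (intro exI[of _ 1]) auto
next
  case False
  obtain x0 where x0: "x0 \<in> S" "\<And>x. x \<in> S \<Longrightarrow> infdist x0 T \<le> infdist x T"
    using continuous_attains_inf[OF assms(1) _ continuous_on_infdist[OF continuous_on_id]] False by blast
  have "x0 \<notin> T" using x0(1) assms(3) by blast
  then have "0 < infdist x0 T"
    using in_closed_iff_infdist_zero[OF compact_imp_closed[OF assms(2)]] False infdist_nonneg[of x0 T]
    by force
  moreover have "infdist x0 T \<le> dist x y" if "x \<in> S" "y \<in> T" for x y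
    using x0(2)[OF that(1)] infdist_le[OF that(2), of x] by linarith
  ultimately show ?thesis by blast
qed

lemma finite_disjoint_compacts_gap:
  fixes K :: "nat \<Rightarrow> 'a::metric_space set"
  assumes "\<And>j. j < m \<Longrightarrow> compact (K j)" "\<And>j j'. j < m \<Longrightarrow> j' < m \<Longrightarrow> j \<noteq> j' \<Longrightarrow> K j \<inter> K j' = {}"
  obtains \<gamma> where "0 < \<gamma>"
    "\<And>j j' x y. j < m \<Longrightarrow> j' < m \<Longrightarrow> j \<noteq> j' \<Longrightarrow> x \<in> K j \<Longrightarrow> y \<in> K j' \<Longrightarrow> \<gamma> \<le> dist x y"
proof -
  define P where "P = {(j, j'). j < m \<and> j' < m \<and> j \<noteq> j'}"
  have "finite P" by (rule finite_subset[of _ "{..<m} \<times> {..<m}"]) (auto simp: P_def)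
  have "\<exists>\<delta>>0. \<forall>x\<in>K (fst p). \<forall>y\<in>K (snd p). \<delta> \<le> dist x y" if p: "p \<in> P" for p
  proof -
    obtain j j' where "p = (j, j')" "j < m" "j' < m" "j \<noteq> j'" using p by (cases p) (auto simp: P_def)
    then show ?thesis using assms by (simp add: compact_disjoint_gap)
  qed
  then obtain \<delta> where \<delta>: "\<And>p. p \<in> P \<Longrightarrow> 0 < \<delta> p \<and> (\<forall>x\<in>K (fst p). \<forall>y\<in>K (snd p). \<delta> p \<le> dist x y)"
    by metis
  define \<gamma> where "\<gamma> = Min (insert 1 (\<delta> ` P))"
  have "0 < \<gamma>" unfolding \<gamma>_def using \<open>finite P\<close> \<delta> by (subst Min_gr_iff) auto
  moreover have "\<gamma> \<le> dist x y"
    if "j < m" "j' < m" "j \<noteq> j'" "x \<in> K j" "y \<in> K j'" for j j' x y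
  proof -
    have "(j, j') \<in> P" using that by (simp add: P_def)
    then have "\<gamma> \<le> \<delta> (j, j')" unfolding \<gamma>_def using \<open>finite P\<close> by (intro Min_le) auto
    also have "\<dots> \<le> dist x y" using \<delta>[OF \<open>(j, j') \<in> P\<close>] that by auto
    finally show ?thesis .
  qed
  ultimately show thesis using that by blast
qed

text \<open>The code of the sub-IFS of the maps \<open>word_map f (blk j)\<close>, \<open>j < m\<close>, all blocks having
  length \<open>L\<close>: the code \<open>u\<close> is the concatenation \<open>blk (u 0) @ blk (u 1) @ \<dots>\<close>.\<close>
definition block_code :: "(nat \<Rightarrow> nat list) \<Rightarrow> nat \<Rightarrow> (nat \<Rightarrow> nat) \<Rightarrow> nat \<Rightarrow> nat" where
  "block_code blk L u i = blk (u (i div L)) ! (i mod L)"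

lemma block_code_shift: "0 < L \<Longrightarrow> (\<lambda>j. block_code blk L u (j + k * L)) = block_code blk L (\<lambda>i. u (i + k))"
  by (intro ext) (simp add: block_code_def add.commute)

lemma block_code_cong:
  "(\<And>i. i < k \<Longrightarrow> u i = v i) \<Longrightarrow> i < k * L \<Longrightarrow> block_code blk L u i = block_code blk L v i"
  by (simp add: block_code_def less_mult_imp_div_less)

lemma prod_block_code:
  assumes "\<And>j. j < k \<Longrightarrow> length (blk (u j)) = L"
  shows "(\<Prod>i<k * L. h (block_code blk L u i)) = (\<Prod>j<k. word_weight h (blk (u j)))"
proof -
  have "(\<Prod>i<k * L. h (block_code blk L u i)) = (\<Prod>j<k. \<Prod>i\<in>{j * L..<j * L + L}. h (block_code blk L u i))"
    by (rule prod.nat_group[symmetric])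
  also have "\<dots> = (\<Prod>j<k. word_weight h (blk (u j)))"
  proof (rule prod.cong[OF refl])
    fix j assume "j \<in> {..<k}"
    have "(\<Prod>i\<in>{0 + j * L..<L + j * L}. h (block_code blk L u i)) = (\<Prod>t\<in>{0..<L}. h (block_code blk L u (t + j * L)))"
      by (rule prod.shift_bounds_nat_ivl)
    also have "\<dots> = word_weight h (blk (u j))"
      using assms \<open>j \<in> {..<k}\<close> by (auto simp: word_weight_def block_code_def atLeast0LessThan intro!: prod.cong)
    finally show "(\<Prod>i\<in>{j * L..<j * L + L}. h (block_code blk L u i)) = word_weight h (blk (u j))"
      by (simp add: add.commute)
  qed
  finally show ?thesis .
qed

locale disjoint_blocks = similarity_ifs +
  fixes m L :: nat and blk :: "nat \<Rightarrow> nat list"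
  assumes L_pos: "0 < L"
    and blk_length: "\<And>j. j < m \<Longrightarrow> length (blk j) = L"
    and blk_set: "\<And>j. j < m \<Longrightarrow> set (blk j) \<subseteq> {1..N}"
    and blk_disjoint: "\<And>j j'. j < m \<Longrightarrow> j' < m \<Longrightarrow> j \<noteq> j' \<Longrightarrow>
      word_map f (blk j) ` attractor N f \<inter> word_map f (blk j') ` attractor N f = {}"
begin

lemma block_code_in_code_space:
  assumes "\<forall>i. u i < m"
  shows "block_code blk L u \<in> code_space N"
  unfolding code_space_def block_code_def
proof (intro CollectI allI)
  fix i
  have "blk (u (i div L)) ! (i mod L) \<in> set (blk (u (i div L)))"
    using assms blk_length L_pos by (intro nth_mem) auto
  then show "blk (u (i div L)) ! (i mod L) \<in> {1..N}" using blk_set assms by blast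
qed

lemma address_block_code_in_block_image:
  assumes "\<forall>i. u i < m"
  shows "address f (block_code blk L u) \<in> word_map f (blk (u 0)) ` attractor N f"
proof -
  have "address f (block_code blk L u)
      = word_map f (blk (u 0)) (address f (\<lambda>j. block_code blk L u (j + length (blk (u 0)))))"
    using assms blk_length L_pos
    by (intro address_prefix block_code_in_code_space) (auto simp: block_code_def)
  also have "(\<lambda>j. block_code blk L u (j + length (blk (u 0)))) = block_code blk L (\<lambda>i. u (i + 1))"
    using block_code_shift[OF L_pos, where u = u and k = 1] assms blk_length by simp
  finally show ?thesis
    using assms block_code_in_code_space[of "\<lambda>i. u (i + 1)"] attractor_eq_address_image by auto
qed

lemma dist_address_block_code:
  assumes "\<forall>i. u i < m" "\<forall>i. v i < m" "\<And>i. i < k \<Longrightarrow> u i = v i"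
  shows "dist (address f (block_code blk L u)) (address f (block_code blk L v)) =
    (\<Prod>j<k. word_weight lc (blk (u j))) *
    dist (address f (block_code blk L (\<lambda>i. u (i + k)))) (address f (block_code blk L (\<lambda>i. v (i + k))))"
proof -
  define w where "w = map (block_code blk L u) [0..<k * L]"
  have "address f (block_code blk L u) = word_map f w (address f (block_code blk L (\<lambda>i. u (i + k))))"
    using address_prefix[OF block_code_in_code_space[OF assms(1)], of w] block_code_shift[OF L_pos]
    by (simp add: w_def)
  moreover have "address f (block_code blk L v) = word_map f w (address f (block_code blk L (\<lambda>i. v (i + k))))"
    using address_prefix[OF block_code_in_code_space[OF assms(2)], of w] block_code_shift[OF L_pos]
      block_code_cong[of k v u] assms(3)
    by (simp add: w_def)
  moreover have "set w \<subseteq> {1..N}"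
    using block_code_in_code_space[OF assms(1)] by (auto simp: w_def code_space_def)
  moreover have "word_weight lc w = (\<Prod>j<k. word_weight lc (blk (u j)))"
    unfolding w_def word_weight_map using assms(1) blk_length by (intro prod_block_code) auto
  ultimately show ?thesis by (simp add: dist_word_map)
qed

lemma block_code_separated:
  obtains \<gamma> where "0 < \<gamma>"
    "separated_coding dist m (\<lambda>j. word_weight lc (blk j)) \<gamma> (\<lambda>u. address f (block_code blk L u))"
proof -
  have "compact (word_map f (blk j) ` attractor N f)" if "j < m" for j
  proof (rule compact_continuous_image[OF lipschitz_on_continuous_on])
    show "(word_weight lc (blk j))-lipschitz_on (attractor N f) (word_map f (blk j))"
      using dist_word_map[OF blk_set[OF that]] word_weight_lc_pos[OF blk_set[OF that]]
      by (intro lipschitz_onI) auto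
    show "compact (attractor N f)" using compact_address_image attractor_eq_address_image by simp
  qed
  then obtain \<gamma> where "0 < \<gamma>" and gap: "\<And>j j' x y. j < m \<Longrightarrow> j' < m \<Longrightarrow> j \<noteq> j' \<Longrightarrow>
      x \<in> word_map f (blk j) ` attractor N f \<Longrightarrow> y \<in> word_map f (blk j') ` attractor N f \<Longrightarrow> \<gamma> \<le> dist x y"
    using finite_disjoint_compacts_gap[of m "\<lambda>j. word_map f (blk j) ` attractor N f"] blk_disjoint by metis
  have "\<gamma> * (\<Prod>i<k. word_weight lc (blk (u i))) \<le> dist (address f (block_code blk L u)) (address f (block_code blk L v))"
    if u: "\<forall>i. u i < m" and v: "\<forall>i. v i < m" and "\<forall>i<k. u i = v i" "u k \<noteq> v k" for u v k
  proof -
    have "\<gamma> \<le> dist (address f (block_code blk L (\<lambda>i. u (i + k)))) (address f (block_code blk L (\<lambda>i. v (i + k))))"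
      using address_block_code_in_block_image[of "\<lambda>i. u (i + k)"]
        address_block_code_in_block_image[of "\<lambda>i. v (i + k)"] that
      by (intro gap[of "u k" "v k"]) auto
    moreover have "0 \<le> (\<Prod>i<k. word_weight lc (blk (u i)))"
    proof (intro prod_nonneg word_weight_nonneg)
      fix i j assume "j \<in> set (blk (u i))"
      then have "j \<in> {1..N}" using u blk_set by blast
      then show "0 \<le> lc j" using lc by blast
    qed
    ultimately show ?thesis
      using dist_address_block_code[OF u v, of k] that(3) by (simp add: mult.commute[of \<gamma>] mult_left_mono)
  qed
  then show thesis using that \<open>0 < \<gamma>\<close> by (auto simp: separated_coding_def)
qed

end

lemma exists_power_ge_1:
  fixes b S :: real
  assumes "1 < S" "0 < b"
  obtains n where "0 < n" "1 \<le> b * S ^ n"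
proof -
  obtain n where "1 / b < S ^ n" using real_arch_pow[OF assms(1)] by blast
  then have "1 < b * S ^ n" using assms(2) by (simp add: field_simps)
  moreover have "b * S ^ n \<le> b * S ^ Suc n"
    using assms by (intro mult_left_mono power_increasing) auto
  ultimately have "1 \<le> b * S ^ Suc n" by linarith
  then show thesis using that[of "Suc n"] by simp
qed

lemma sum_powr_strict_antimono:
  fixes a :: "nat \<Rightarrow> real"
  assumes "finite A" "A \<noteq> {}" "\<And>i. i \<in> A \<Longrightarrow> 0 < a i \<and> a i < 1" "s < t"
  shows "(\<Sum>i\<in>A. a i powr t) < (\<Sum>i\<in>A. a i powr s)"
  using assms by (intro sum_strict_mono powr_less_mono') auto

context similarity_ifs
begin

text \<open>The blocks are \<open>w @ \<omega>\<close> with \<open>|w| = n\<close>, where \<open>\<omega>\<close> maps \<open>A\<^sub>\<F>\<close> into the SOSC set \<open>V\<close>;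
  their ratios satisfy \<open>\<Sum>(c\<^sub>w c\<^sub>\<omega>)\<^sup>s = c\<^sub>\<omega>\<^sup>s (\<Sum>c\<^sub>i\<^sup>s)\<^sup>n \<ge> 1\<close> for \<open>n\<close> large.\<close>
lemma SOSC_disjoint_blocks:
  assumes "SOSC N f" "1 < (\<Sum>i=1..N. lc i powr s)"
  obtains m L blk where "disjoint_blocks N f lc q m L blk" "1 \<le> (\<Sum>j<m. word_weight lc (blk j) powr s)"
proof -
  obtain V where "open V" "\<forall>i\<in>{1..N}. f i ` V \<subseteq> V"
      "\<forall>i\<in>{1..N}. \<forall>j\<in>{1..N}. i \<noteq> j \<longrightarrow> f i ` V \<inter> f j ` V = {}"
      "V \<inter> attractor N f \<noteq> {}"
    using assms(1) unfolding SOSC_def by blast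
  then have V: "open V" "\<And>i. i \<in> {1..N} \<Longrightarrow> f i ` V \<subseteq> V"
      "\<And>i j. i \<in> {1..N} \<Longrightarrow> j \<in> {1..N} \<Longrightarrow> i \<noteq> j \<Longrightarrow> f i ` V \<inter> f j ` V = {}"
      "V \<inter> attractor N f \<noteq> {}"
    by blast+
  then obtain \<omega> where \<omega>: "set \<omega> \<subseteq> {1..N}" "word_map f \<omega> ` attractor N f \<subseteq> V"
    using word_map_attractor_into_open by blast
  have "0 < word_weight lc \<omega> powr s" using word_weight_lc_pos[OF \<omega>(1)] by simp
  then obtain n where "0 < n" and n: "1 \<le> word_weight lc \<omega> powr s * (\<Sum>i=1..N. lc i powr s) ^ n"
    using exists_power_ge_1[OF assms(2)] by blast
  define W where "W = {w. set w \<subseteq> {1..N} \<and> length w = n}"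
  have "finite W" unfolding W_def by (rule finite_lists_length_eq) simp
  then obtain h where h: "bij_betw h {..<card W} W"
    using ex_bij_betw_nat_finite lessThan_atLeast0 by metis
  then have hW: "set (h j) \<subseteq> {1..N}" "length (h j) = n" if "j < card W" for j
    using that by (auto simp: bij_betw_def W_def)
  define blk where "blk j = h j @ \<omega>" for j
  have "disjoint_blocks N f lc q (card W) (n + length \<omega>) blk"
  proof unfold_locales
    fix j j' assume j: "j < card W" "j' < card W" "j \<noteq> j'"
    then have "h j \<noteq> h j'" using h by (auto simp: bij_betw_def inj_on_def)
    then have "word_map f (h j) ` V \<inter> word_map f (h j') ` V = {}"
      using word_map_images_disjoint[OF V(2,3)] hW j by auto
    then show "word_map f (blk j) ` attractor N f \<inter> word_map f (blk j') ` attractor N f = {}"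
      using \<omega>(2) by (auto simp: blk_def word_map_append image_comp[symmetric])
  qed (use \<open>0 < n\<close> hW \<omega>(1) in \<open>auto simp: blk_def\<close>)
  moreover have "1 \<le> (\<Sum>j<card W. word_weight lc (blk j) powr s)"
  proof -
    have "(\<Sum>j<card W. word_weight lc (blk j) powr s)
        = (\<Sum>j<card W. word_weight lc (h j) powr s) * word_weight lc \<omega> powr s"
      using hW \<omega>(1) lc by (auto simp: blk_def word_weight_append sum_distrib_right powr_mult
          intro!: sum.cong word_weight_nonneg)
    also have "(\<Sum>j<card W. word_weight lc (h j) powr s) = (\<Sum>w\<in>W. word_weight lc w powr s)"
      by (rule sum.reindex_bij_betw[OF h])
    also have "\<dots> = (\<Sum>i=1..N. lc i powr s) ^ n"
      unfolding W_def using lc by (intro sum_word_weight_powr_words) auto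
    finally show ?thesis using n by (simp add: mult.commute)
  qed
  ultimately show thesis using that by blast
qed

lemma hausdorff_measure_pos_if_fst_covers_attractor:
  fixes E :: "('a \<times> 'b::metric_space) set"
  assumes "SOSC N f" "0 < s" "1 < (\<Sum>i=1..N. lc i powr s)" "attractor N f \<subseteq> fst ` E"
  shows "0 < hausdorff_measure max_dist s E"
proof -
  obtain m L blk where blocks: "disjoint_blocks N f lc q m L blk"
    and weights: "1 \<le> (\<Sum>j<m. word_weight lc (blk j) powr s)"
    using SOSC_disjoint_blocks[OF assms(1,3)] by blast
  interpret disjoint_blocks N f lc q m L blk by (fact blocks)
  obtain \<gamma> where "0 < \<gamma>"
    and sep: "separated_coding dist m (\<lambda>j. word_weight lc (blk j)) \<gamma> (\<lambda>u. address f (block_code blk L u))"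
    by (rule block_code_separated)
  define \<Psi> where "\<Psi> u = (SOME p. p \<in> E \<and> fst p = address f (block_code blk L u))" for u
  have \<Psi>: "\<Psi> u \<in> E \<and> fst (\<Psi> u) = address f (block_code blk L u)" if "\<forall>i. u i < m" for u
  proof -
    have "address f (block_code blk L u) \<in> fst ` E"
      using block_code_in_code_space[OF that] attractor_eq_address_image assms(4) by blast
    then obtain p where "p \<in> E" "fst p = address f (block_code blk L u)" by force
    then show ?thesis
      using someI[of "\<lambda>p. p \<in> E \<and> fst p = address f (block_code blk L u)" p] by (simp add: \<Psi>_def)
  qed
  show ?thesis
  proof (rule hausdorff_measure_pos_if_separated_coding[OF _ \<open>0 < \<gamma>\<close> assms(2) _ weights])
    show "separated_coding max_dist m (\<lambda>j. word_weight lc (blk j)) \<gamma> \<Psi>"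
      using sep \<Psi> unfolding separated_coding_def max_dist_def by (smt (verit))
    show "0 < word_weight lc (blk j) \<and> word_weight lc (blk j) < 1" if "j < m" for j
    proof
      show "0 < word_weight lc (blk j)" by (rule word_weight_lc_pos[OF blk_set[OF that]])
      have "blk j \<noteq> []" using blk_length[OF that] L_pos by auto
      then show "word_weight lc (blk j) < 1"
        using blk_set[OF that] lc_bounds by (intro word_weight_less_1) blast+
    qed
    show "\<Psi> u \<in> E" if "\<forall>i. u i < m" for u using \<Psi>[OF that] by blast
  qed
qed


lemma similarity_dim_le_hausdorff_dim:
  fixes E :: "('a \<times> 'b::metric_space) set"
  assumes "SOSC N f" "(\<Sum>i=1..N. lc i powr s0) = 1" "attractor N f \<subseteq> fst ` E"
  shows "ereal s0 \<le> hausdorff_dim max_dist E"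
proof (rule hausdorff_dim_ge)
  show "E \<noteq> {}" using assms(3) attractor_eq_address_image address_image_nonempty by auto
  fix s assume "0 < s" "s < s0"
  have "{1..N} \<noteq> {}" using N_pos by simp
  then have "1 < (\<Sum>i=1..N. lc i powr s)"
    using sum_powr_strict_antimono[of "{1..N}" lc s s0] lc_bounds \<open>s < s0\<close> assms(2) by simp
  then show "0 < hausdorff_measure max_dist s E"
    by (rule hausdorff_measure_pos_if_fst_covers_attractor[OF assms(1) \<open>0 < s\<close> _ assms(3)])
qed
end

section \<open>The graph of the fractal transformation\<close>

lemma fst_fractal_graph: "fst ` fractal_graph N f g = attractor N f"
  unfolding fractal_graph_def by force

locale contractive_ifs_pair = F: contractive_ifs N f c qf + G: contractive_ifs N g r qg
  for N f c qf and g :: "nat \<Rightarrow> 'b::complete_space \<Rightarrow> 'b" and r qg +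
  assumes c_le_r: "\<And>i. i \<in> {1..N} \<Longrightarrow> c i \<le> r i"
begin

definition piece_diam_bound :: real where
  "piece_diam_bound = F.diam_bound + G.diam_bound"

lemma piece_diam_bound_nonneg: "0 \<le> piece_diam_bound"
  using F.diam_bound_nonneg G.diam_bound_nonneg by (simp add: piece_diam_bound_def)

definition graph_piece :: "nat list \<Rightarrow> ('a \<times> 'b) set" where
  "graph_piece w = {(address f \<sigma>, address g \<sigma>) | \<sigma>. \<sigma> \<in> code_space N \<and> \<sigma> \<in> cylinder w}"

lemma fractal_graph_subset_pieces:
  "fractal_graph N f g \<subseteq> (\<Union>w\<in>{w. set w \<subseteq> {1..N} \<and> length w = n}. graph_piece w)"
proof
  fix p assume "p \<in> fractal_graph N f g"
  then obtain x where x: "x \<in> attractor N f" "p = (x, fractal_transformation N f g x)"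
    by (auto simp: fractal_graph_def)
  define \<sigma> where "\<sigma> = tops N f x"
  have \<sigma>: "\<sigma> \<in> code_space N" "address f \<sigma> = x"
    using x(1) F.tops_address F.attractor_eq_address_image by (auto simp: \<sigma>_def)
  moreover have "p = (address f \<sigma>, address g \<sigma>)"
    using x(2) \<sigma>(2) by (simp add: fractal_transformation_def \<sigma>_def)
  ultimately have "p \<in> graph_piece (map \<sigma> [0..<n])"
    using prefix_in_cylinder[of \<sigma> n] unfolding graph_piece_def by blast
  moreover have "set (map \<sigma> [0..<n]) \<subseteq> {1..N}" using \<sigma>(1) by (auto simp: code_space_def)
  ultimately show "p \<in> (\<Union>w\<in>{w. set w \<subseteq> {1..N} \<and> length w = n}. graph_piece w)"
    by (intro UN_I[of "map \<sigma> [0..<n]"]) auto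
qed

text \<open>Since \<open>c\<^sub>i \<le> r\<^sub>i\<close>, both coordinates of a piece are controlled by the \<open>\<G>\<close>-ratios.\<close>
lemma max_dist_graph_piece_le:
  assumes "set w \<subseteq> {1..N}" "p \<in> graph_piece w" "p' \<in> graph_piece w"
  shows "max_dist p p' \<le> word_weight r w * piece_diam_bound"
proof -
  obtain \<sigma> \<tau> where \<sigma>\<tau>: "\<sigma> \<in> code_space N" "\<tau> \<in> code_space N" "\<sigma> \<in> cylinder w" "\<tau> \<in> cylinder w"
    "p = (address f \<sigma>, address g \<sigma>)" "p' = (address f \<tau>, address g \<tau>)"
    using assms(2,3) by (auto simp: graph_piece_def)
  have agree: "\<And>i. i < length w \<Longrightarrow> \<sigma> i = \<tau> i" using \<sigma>\<tau>(3,4) by (simp add: cylinder_def)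
  have r_prod: "(\<Prod>i<length w. r (\<sigma> i)) = word_weight r w"
    using \<sigma>\<tau>(3) by (simp add: word_weight_def cylinder_def)
  have "(\<Prod>i<length w. c (\<sigma> i)) \<le> (\<Prod>i<length w. r (\<sigma> i))"
    using \<sigma>\<tau>(1) F.lc c_le_r by (intro prod_mono) (auto simp: code_space_def)
  then have "dist (address f \<sigma>) (address f \<tau>) \<le> word_weight r w * F.diam_bound"
    using F.dist_address_le_prod[where n = "length w", OF \<sigma>\<tau>(1,2) agree] mult_right_mono[OF _ F.diam_bound_nonneg] r_prod
    by (smt (verit))
  moreover have "dist (address g \<sigma>) (address g \<tau>) \<le> word_weight r w * G.diam_bound"
    using G.dist_address_le_prod[where n = "length w", OF \<sigma>\<tau>(1,2) agree] r_prod by simp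
  moreover have "0 \<le> word_weight r w"
    using assms(1) G.lc by (intro word_weight_nonneg) auto
  ultimately show ?thesis
    using F.diam_bound_nonneg G.diam_bound_nonneg \<sigma>\<tau>(5,6)
    by (auto simp: max_dist_def piece_diam_bound_def distrib_left intro: order_trans add_increasing2 add_increasing)
qed

lemma diam_pow_graph_piece_le:
  assumes "set w \<subseteq> {1..N}" "0 < s"
  shows "diam_pow max_dist s (graph_piece w) \<le> ennreal (word_weight r w powr s * piece_diam_bound powr s)"
proof (cases "graph_piece w = {}")
  case False
  have "ddiam max_dist (graph_piece w) \<le> word_weight r w * piece_diam_bound"
    by (rule ddiam_le[OF False max_dist_graph_piece_le[OF assms(1)]])
  moreover obtain x where "x \<in> graph_piece w" using False by blast
  have "max_dist x x \<le> ddiam max_dist (graph_piece w)"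
    using \<open>x \<in> graph_piece w\<close> \<open>x \<in> graph_piece w\<close> max_dist_graph_piece_le[OF assms(1)]
    by (rule dist_le_ddiam[where d = max_dist and b = "word_weight r w * piece_diam_bound"])
  then have "0 \<le> ddiam max_dist (graph_piece w)" by (simp add: max_dist_def)
  moreover have "0 \<le> word_weight r w" using assms(1) G.lc by (intro word_weight_nonneg) auto
  ultimately show ?thesis
    using False assms(2) piece_diam_bound_nonneg
    by (auto simp: diam_pow_def powr_mult[symmetric] intro!: ennreal_leI powr_mono2)
qed (simp add: diam_pow_def)

lemma fractal_graph_cover_sum_le:
  assumes "0 < s" "qg ^ n * piece_diam_bound \<le> \<delta>"
  obtains U where "delta_cover max_dist \<delta> (fractal_graph N f g) U"
    "(\<Sum>k. diam_pow max_dist s (U k)) \<le> ennreal (piece_diam_bound powr s * (\<Sum>i=1..N. r i powr s) ^ n)"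
proof -
  define W where "W = {w. set w \<subseteq> {1..N} \<and> length w = n}"
  have "finite W" unfolding W_def by (rule finite_lists_length_eq) simp
  then obtain h where h: "bij_betw h {..<card W} W"
    using ex_bij_betw_nat_finite lessThan_atLeast0 by metis
  have hW: "set (h k) \<subseteq> {1..N}" "length (h k) = n" if "k < card W" for k
    using h that by (auto simp: bij_betw_def W_def)
  define U where "U k = (if k < card W then graph_piece (h k) else {})" for k
  have "delta_cover max_dist \<delta> (fractal_graph N f g) U"
    unfolding delta_cover_def
  proof (intro conjI allI ballI)
    show "fractal_graph N f g \<subseteq> (\<Union>k. U k)"
    proof
      fix p assume "p \<in> fractal_graph N f g"
      then obtain w where "w \<in> W" "p \<in> graph_piece w"
        using fractal_graph_subset_pieces[of n] by (auto simp: W_def)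
      moreover obtain k where "k < card W" "h k = w"
        using \<open>w \<in> W\<close> h by (metis bij_betw_def imageE lessThan_iff)
      ultimately show "p \<in> (\<Union>k. U k)" by (auto simp: U_def)
    qed
    fix k x y assume "x \<in> U k" "y \<in> U k"
    then have "k < card W" by (auto simp: U_def split: if_splits)
    then have "max_dist x y \<le> word_weight r (h k) * piece_diam_bound"
      using max_dist_graph_piece_le[OF hW(1)] \<open>x \<in> U k\<close> \<open>y \<in> U k\<close> by (simp add: U_def)
    also have "word_weight r (h k) * piece_diam_bound \<le> qg ^ n * piece_diam_bound"
      using hW[OF \<open>k < card W\<close>] G.lc piece_diam_bound_nonneg
      by (intro mult_right_mono) (auto intro!: word_weight_le_power[of _ r qg, simplified])
    finally show "max_dist x y \<le> \<delta>" using assms(2) by simp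
  qed
  moreover have "(\<Sum>k. diam_pow max_dist s (U k)) \<le> ennreal (piece_diam_bound powr s * (\<Sum>i=1..N. r i powr s) ^ n)"
  proof -
    have "(\<Sum>k. diam_pow max_dist s (U k)) = (\<Sum>k<card W. diam_pow max_dist s (graph_piece (h k)))"
      by (subst suminf_finite[of "{..<card W}"]) (auto simp: U_def diam_pow_def)
    also have "\<dots> \<le> (\<Sum>k<card W. ennreal (word_weight r (h k) powr s * piece_diam_bound powr s))"
      using diam_pow_graph_piece_le[OF hW(1) assms(1)] by (intro sum_mono) auto
    also have "\<dots> = ennreal (\<Sum>w\<in>W. word_weight r w powr s * piece_diam_bound powr s)"
      using sum.reindex_bij_betw[OF h, of "\<lambda>w. word_weight r w powr s * piece_diam_bound powr s"]
      by (simp add: sum_ennreal)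
    also have "(\<Sum>w\<in>W. word_weight r w powr s * piece_diam_bound powr s)
        = piece_diam_bound powr s * (\<Sum>i=1..N. r i powr s) ^ n"
      unfolding W_def sum_distrib_right[symmetric]
      by (subst sum_word_weight_powr_words) (use G.lc in auto)
    finally show ?thesis .
  qed
  ultimately show thesis using that by simp
qed

lemma hausdorff_measure_fractal_graph_eq_0:
  assumes "0 < s" "(\<Sum>i=1..N. r i powr s) < 1"
  shows "hausdorff_measure max_dist s (fractal_graph N f g) = 0"
proof (rule hausdorff_measure_eq_0I)
  fix \<delta> e :: real assume "0 < \<delta>" "0 < e"
  define B where "B = piece_diam_bound"
  have "0 \<le> (\<Sum>i=1..N. r i powr s)" by (intro sum_nonneg) auto
  then have "(\<lambda>n. B powr s * (\<Sum>i=1..N. r i powr s) ^ n) \<longlonglongrightarrow> 0"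
    using assms(2) by (intro tendsto_mult_right_zero LIMSEQ_power_zero) auto
  from order_tendstoD(2)[OF this \<open>0 < e\<close>] order_tendstoD(2)[OF G.power_q_tendsto_0 \<open>0 < \<delta>\<close>]
  have "\<forall>\<^sub>F n in sequentially. qg ^ n * B < \<delta> \<and> B powr s * (\<Sum>i=1..N. r i powr s) ^ n < e"
    by (simp add: eventually_conj)
  then obtain n where "qg ^ n * B < \<delta>" "B powr s * (\<Sum>i=1..N. r i powr s) ^ n < e"
    by (auto simp: eventually_sequentially)
  then show "\<exists>U. delta_cover max_dist \<delta> (fractal_graph N f g) U \<and> (\<Sum>k. diam_pow max_dist s (U k)) \<le> ennreal e"
    using fractal_graph_cover_sum_le[OF assms(1), of n \<delta>] unfolding B_def
    by (smt (verit) ennreal_leI order_trans)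
qed

lemma hausdorff_dim_fractal_graph_le:
  assumes "\<And>i. i \<in> {1..N} \<Longrightarrow> 0 < r i" "(\<Sum>i=1..N. r i powr t) = 1"
  shows "hausdorff_dim max_dist (fractal_graph N f g) \<le> ereal t"
proof -
  have "{1..N} \<noteq> {}" using G.N_pos by simp
  have r: "0 < r i \<and> r i < 1" if "i \<in> {1..N}" for i
    using assms(1)[OF that] G.lc[OF that] G.q_less_1 by simp
  have "0 \<le> t"
  proof (rule ccontr)
    assume "\<not> 0 \<le> t"
    then have "(\<Sum>i=1..N. r i powr 0) < 1"
      using sum_powr_strict_antimono[where a = r and s = t and t = 0, OF finite_atLeastAtMost \<open>{1..N} \<noteq> {}\<close> r] assms(2) by simp
    moreover have "(\<Sum>i=1..N. r i powr 0) = (\<Sum>i=1..N. 1)"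
      using r by (intro sum.cong refl) (simp add: less_imp_neq[symmetric])
    ultimately show False using G.N_pos by simp
  qed
  then show ?thesis
  proof (rule hausdorff_dim_le)
    fix s assume "t < s"
    then have "(\<Sum>i=1..N. r i powr s) < 1"
      using sum_powr_strict_antimono[where a = r and s = t and t = s, OF finite_atLeastAtMost \<open>{1..N} \<noteq> {}\<close> r] assms(2) by simp
    then show "hausdorff_measure max_dist s (fractal_graph N f g) = 0"
      using hausdorff_measure_fractal_graph_eq_0 \<open>0 \<le> t\<close> \<open>t < s\<close> by simp
  qed
qed

end

lemma contractive_ifs_Max:
  assumes "1 \<le> N" "\<forall>i\<in>{1..N}. 0 < lc i \<and> lc i < 1"
    and "\<forall>i\<in>{1..N}. \<forall>x y. dist (f i x) (f i y) \<le> lc i * dist x y"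
  shows "contractive_ifs N f lc (Max (lc ` {1..N}))"
  using assms by unfold_locales (auto simp: less_imp_le)

theorem mainTheorem7:
  fixes N :: nat
    and f :: "nat \<Rightarrow> 'a::complete_space \<Rightarrow> 'a"
    and g :: "nat \<Rightarrow> 'b::complete_space \<Rightarrow> 'b"
    and c r :: "nat \<Rightarrow> real"
    and s0 t0 :: real
  assumes "N \<ge> 1"
    and "\<forall>i\<in>{1..N}. 0 < c i \<and> c i < 1"
    and "\<forall>i\<in>{1..N}. 0 < r i \<and> r i < 1"
    and "\<forall>i\<in>{1..N}. \<forall>x x'. dist (f i x) (f i x') = c i * dist x x'"
    and "\<forall>i\<in>{1..N}. \<forall>y y'. dist (g i y) (g i y') \<le> r i * dist y y'"
    and "\<forall>i\<in>{1..N}. c i \<le> r i"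
    and "SOSC N f"
    and "(\<Sum>i=1..N. r i powr t0) = 1"
    and "(\<Sum>i=1..N. c i powr s0) = 1"
  shows "ereal s0 \<le> hausdorff_dim max_dist (fractal_graph N f g) \<and>
         hausdorff_dim max_dist (fractal_graph N f g) \<le> ereal t0"
proof -
  have F: "contractive_ifs N f c (Max (c ` {1..N}))"
    using assms(1,2,4) by (intro contractive_ifs_Max) auto
  have G: "contractive_ifs N g r (Max (r ` {1..N}))"
    using assms(1,3,5) by (rule contractive_ifs_Max)
  interpret F: similarity_ifs N f c "Max (c ` {1..N})"
    using F assms(2,4) by (simp add: similarity_ifs_def similarity_ifs_axioms_def)
  interpret contractive_ifs_pair N f c "Max (c ` {1..N})" g r "Max (r ` {1..N})"
    using F G assms(6) by (simp add: contractive_ifs_pair_def contractive_ifs_pair_axioms_def)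
  have "ereal s0 \<le> hausdorff_dim max_dist (fractal_graph N f g)"
    by (rule F.similarity_dim_le_hausdorff_dim[OF assms(7,9)]) (simp add: fst_fractal_graph)
  moreover have "hausdorff_dim max_dist (fractal_graph N f g) \<le> ereal t0"
    using hausdorff_dim_fractal_graph_le assms(3,8) by simp
  ultimately show ?thesis ..
qed

end
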